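(* Let $X:[0,\infty)\times\mathbb R^d\times\Omega\to\mathbb R$, $x_0\in\mathbb R^d$, $T>0$, and suppose there are $A_T>0$, $p>d+1$, $\gamma\in(0,1)$, $\beta\in(0,1)$ such that for all $x,y\in\mathbb R^d$, $t,s\in[0,T]$: $$\mathbb E|X(0,x_0)|^p\le A_T,\quad \mathbb E|X(t,x)-X(t,y)|^p\le A_T|x-y|^{\gamma p},\quad \mathbb E|X(t,x)-X(s,x)|^p\le A_T|t-s|^{\beta p}.$$ If $p\gamma>d+1$, $p\beta>d+1$ and $\theta>\frac{p\gamma}{p-(d+1)}$, then there is a constant $C=C_{p,d,\gamma,\beta,\theta}$ (not depending on $X$, $A_T$, $x_0$) such that ($X$ has a continuous modification on $[0,T]\times\mathbb R^d$ which satisfies) $$\mathbb E\Big|\sup_{t\in[0,T]}\sup_{x\in\mathbb R^d}\frac{|X(t,x)|}{1+|x-x_0|^\theta}\Big|^p\le CA_T,\qquad \mathbb P\Big(\lim_{|x|\to\infty}\sup_{t\in[0,T]}\frac{|X(t,x)|}{1+|x-x_0|^\theta}=0\Big)=1.$$ Hence $X\in C_{x_0,\theta}([0,T]\times\mathbb R^d)$ almost surely.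
   Context: $C_{x_0,\theta}([0,T]\times\mathbb R^d)$ is the space of continuous $\psi:[0,T]\times\mathbb R^d\to\mathbb R$ with $\lim_{|x|\to\infty}\sup_{t\in[0,T]}|\psi(t,x)|/(1+|x-x_0|^\theta)=0$, normed by $\sup_{t\in[0,T]}\sup_x|\psi(t,x)|/(1+|x-x_0|^\theta)$. *)

theory Defs
  imports "HOL-Probability.Probability"
begin

end

theory Submission
  imports Defs
begin

text \<open>
  Kolmogorov's chaining argument, run on space-time cubes of growing size. On the unit cube of
  \<open>\<real>\<^sup>d \<times> \<real>\<close>, a grid edge of level \<open>n\<close> has \<open>p\<close>-th moment \<open>O(2\<^sup>-\<^sup>n\<^sup>\<eta>)\<close> with
  \<open>\<eta> = min(\<gamma>p, \<beta>p) > d + 1\<close>, while there are only \<open>O(2\<^sup>n\<^sup>(\<^sup>d\<^sup>+\<^sup>1\<^sup>))\<close> edges; so a random series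
  controlling all maximal level increments has finite mean, and on the event where it is finite
  the process is uniformly continuous on the dyadic points and extends continuously.
  Mapping \<open>[0, T]\<close> times the cube of side \<open>2\<^sup>j\<^sup>+\<^sup>1\<close> around \<open>x\<^sub>0\<close> onto the unit cube scales the
  spatial moment bound by \<open>2\<^sup>j\<^sup>\<gamma>\<^sup>p\<close>, so the supremum of the modification over the \<open>j\<close>-th cube has
  \<open>p\<close>-th moment \<open>O(A 2\<^sup>j\<^sup>\<gamma>\<^sup>p)\<close>. Dividing by the weight \<open>2\<^sup>j\<^sup>\<theta>\<close> with \<open>\<theta> > \<gamma>\<close> and summing over \<open>j\<close>
  gives the moment bound for the weighted supremum; the summands of the almost surely finite sum
  tend to zero, which is the decay at infinity.
\<close>

section \<open>Dyadic chaining on the unit cube\<close>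

definition unit_cube :: "'e::euclidean_space set" where
  "unit_cube = {u. \<forall>b\<in>Basis. 0 \<le> u \<bullet> b \<and> u \<bullet> b \<le> 1}"

definition dyadic_grid :: "nat \<Rightarrow> 'e::euclidean_space set" where
  "dyadic_grid n = {u. \<forall>b\<in>Basis. \<exists>k::nat. k \<le> 2^n \<and> u \<bullet> b = real k / 2^n}"

definition dyadic_points :: "'e::euclidean_space set" where
  "dyadic_points = (\<Union>n. dyadic_grid n)"

definition dyadic_round :: "nat \<Rightarrow> 'e::euclidean_space \<Rightarrow> 'e" where
  "dyadic_round n u = (\<Sum>b\<in>Basis. (of_int \<lfloor>2^n * (u \<bullet> b)\<rfloor> / 2^n) *\<^sub>R b)"

definition dyadic_edges :: "nat \<Rightarrow> ('e::euclidean_space \<times> 'e) set" where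
  "dyadic_edges n = {(u, b). u \<in> dyadic_grid n \<and> b \<in> Basis \<and> u + (1/2^n) *\<^sub>R b \<in> dyadic_grid n}"

definition max_dyadic_increment :: "nat \<Rightarrow> ('e::euclidean_space \<Rightarrow> real) \<Rightarrow> real" where
  "max_dyadic_increment n f =
     Max (insert 0 ((\<lambda>(u, b). \<bar>f (u + (1/2^n) *\<^sub>R b) - f u\<bar>) ` dyadic_edges n))"

lemma dyadic_grid_subset_image:
  "dyadic_grid n \<subseteq> (\<lambda>g. \<Sum>b\<in>Basis. (real (g b) / 2^n) *\<^sub>R b) ` (Pi\<^sub>E Basis (\<lambda>_. {..(2::nat)^n}))"
proof
  fix u :: "'e::euclidean_space" assume "u \<in> dyadic_grid n"
  then have "\<forall>b\<in>Basis. \<exists>k::nat. k \<le> 2^n \<and> u \<bullet> b = real k / 2^n"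
    by (simp add: dyadic_grid_def)
  then obtain g where g: "\<And>b. b \<in> Basis \<Longrightarrow> g b \<le> 2^n \<and> u \<bullet> b = real (g b) / 2^n"
    by metis
  have "restrict g Basis \<in> Pi\<^sub>E Basis (\<lambda>_. {..(2::nat)^n})" using g by auto
  moreover have "u = (\<Sum>b\<in>Basis. (real (restrict g Basis b) / 2^n) *\<^sub>R b)"
    by (subst euclidean_representation[symmetric, of u]) (auto intro!: sum.cong simp: g)
  ultimately show "u \<in> (\<lambda>g. \<Sum>b\<in>Basis. (real (g b) / 2^n) *\<^sub>R b) ` (Pi\<^sub>E Basis (\<lambda>_. {..(2::nat)^n}))"
    by blast
qed

lemma finite_dyadic_grid: "finite (dyadic_grid n :: 'e::euclidean_space set)"
  by (rule finite_subset[OF dyadic_grid_subset_image]) (auto intro!: finite_PiE)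

lemma card_dyadic_grid_le: "card (dyadic_grid n :: 'e::euclidean_space set) \<le> (2^n + 1) ^ DIM('e)"
proof -
  have "card (dyadic_grid n :: 'e set)
      \<le> card ((\<lambda>g. \<Sum>b\<in>Basis. (real (g b) / 2^n) *\<^sub>R (b::'e)) ` (Pi\<^sub>E Basis (\<lambda>_. {..(2::nat)^n})))"
    by (rule card_mono[OF _ dyadic_grid_subset_image]) (auto intro!: finite_PiE)
  also have "\<dots> \<le> card (Pi\<^sub>E (Basis::'e set) (\<lambda>_. {..(2::nat)^n}))"
    by (rule card_image_le) (auto intro!: finite_PiE)
  also have "\<dots> = (2^n + 1) ^ DIM('e)" by (simp add: card_PiE)
  finally show ?thesis .
qed

lemma dyadic_edges_subset: "(dyadic_edges n :: ('e::euclidean_space \<times> 'e) set) \<subseteq> dyadic_grid n \<times> Basis"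
  by (auto simp: dyadic_edges_def)

lemma finite_dyadic_edges: "finite (dyadic_edges n :: ('e::euclidean_space \<times> 'e) set)"
  by (rule finite_subset[OF dyadic_edges_subset]) (simp add: finite_dyadic_grid)

lemma card_dyadic_edges_le:
  "card (dyadic_edges n :: ('e::euclidean_space \<times> 'e) set) \<le> (2^n + 1) ^ DIM('e) * DIM('e)"
proof -
  have "card (dyadic_edges n :: ('e \<times> 'e) set) \<le> card (dyadic_grid n \<times> Basis :: ('e \<times> 'e) set)"
    by (intro card_mono dyadic_edges_subset finite_cartesian_product finite_dyadic_grid finite_Basis)
  also have "\<dots> \<le> (2^n + 1) ^ DIM('e) * DIM('e)"
    using card_dyadic_grid_le[where 'e='e, of n] by (simp add: card_cartesian_product)
  finally show ?thesis .
qed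

lemma max_dyadic_increment_ge:
  "(u, b) \<in> dyadic_edges n \<Longrightarrow> \<bar>f (u + (1/2^n) *\<^sub>R b) - f u\<bar> \<le> max_dyadic_increment n f"
  unfolding max_dyadic_increment_def by (rule Max_ge) (auto simp: finite_dyadic_edges)

lemma max_dyadic_increment_nonneg: "0 \<le> max_dyadic_increment n f"
  unfolding max_dyadic_increment_def by (rule Max_ge) (auto simp: finite_dyadic_edges)

lemma dyadic_grid_mono:
  assumes "m \<le> n" shows "dyadic_grid m \<subseteq> dyadic_grid n"
proof
  fix u :: "'e::euclidean_space" assume u: "u \<in> dyadic_grid m"
  show "u \<in> dyadic_grid n" unfolding dyadic_grid_def
  proof (intro CollectI ballI)
    fix b :: "'e::euclidean_space" assume "b \<in> Basis"
    then obtain k :: nat where k: "k \<le> 2^m" "u \<bullet> b = real k / 2^m"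
      using u by (auto simp: dyadic_grid_def)
    have e: "(2::real)^n = 2^m * 2^(n - m)" using assms by (simp add: power_add[symmetric])
    have "k * 2^(n - m) \<le> (2::nat)^m * 2^(n - m)" using k by simp
    also have "\<dots> = 2^n" using assms by (simp add: power_add[symmetric])
    finally show "\<exists>k::nat. k \<le> 2^n \<and> u \<bullet> b = real k / 2^n"
      using k by (intro exI[of _ "k * 2^(n - m)"]) (simp add: e)
  qed
qed

lemma dyadic_grid_subset_unit_cube: "dyadic_grid n \<subseteq> unit_cube"
proof
  fix u :: "'e::euclidean_space" assume u: "u \<in> dyadic_grid n"
  show "u \<in> unit_cube" unfolding unit_cube_def
  proof (intro CollectI ballI)
    fix b :: "'e::euclidean_space" assume "b \<in> Basis"
    then obtain k :: nat where k: "k \<le> 2^n" "u \<bullet> b = real k / 2^n"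
      using u by (auto simp: dyadic_grid_def)
    have "real k \<le> 2^n" using k(1) by (metis of_nat_le_iff of_nat_numeral of_nat_power)
    then show "0 \<le> u \<bullet> b \<and> u \<bullet> b \<le> 1" using k(2) by simp
  qed
qed

lemma dyadic_points_subset_unit_cube: "dyadic_points \<subseteq> unit_cube"
  using dyadic_grid_subset_unit_cube by (auto simp: dyadic_points_def)

lemma zero_in_dyadic_points: "0 \<in> dyadic_points"
  unfolding dyadic_points_def dyadic_grid_def by (intro UN_I[of 0]) auto

lemma inner_dyadic_round:
  fixes u :: "'e::euclidean_space"
  shows "b \<in> Basis \<Longrightarrow> dyadic_round n u \<bullet> b = of_int \<lfloor>2^n * (u \<bullet> b)\<rfloor> / 2^n"
  by (simp add: dyadic_round_def inner_sum_left_Basis)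

lemma dyadic_round_in_grid:
  fixes u :: "'e::euclidean_space"
  assumes "u \<in> unit_cube" shows "dyadic_round n u \<in> dyadic_grid n"
  unfolding dyadic_grid_def
proof (intro CollectI ballI)
  fix b :: "'e::euclidean_space" assume b: "b \<in> Basis"
  have u: "0 \<le> u \<bullet> b" "u \<bullet> b \<le> 1" using assms b by (auto simp: unit_cube_def)
  have lower: "0 \<le> \<lfloor>2^n * (u \<bullet> b)\<rfloor>" using u by simp
  have "\<lfloor>2^n * (u \<bullet> b)\<rfloor> \<le> \<lfloor>(2::real)^n\<rfloor>" using u by (intro floor_mono) simp
  then have upper: "\<lfloor>2^n * (u \<bullet> b)\<rfloor> \<le> 2^n" by simp
  show "\<exists>k::nat. k \<le> 2^n \<and> dyadic_round n u \<bullet> b = real k / 2^n"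
  proof (intro exI conjI)
    show "nat \<lfloor>2^n * (u \<bullet> b)\<rfloor> \<le> 2^n" using upper by (simp add: nat_le_iff)
    show "dyadic_round n u \<bullet> b = real (nat \<lfloor>2^n * (u \<bullet> b)\<rfloor>) / 2^n"
      using lower b by (simp add: inner_dyadic_round)
  qed
qed

lemma dyadic_round_grid_point:
  fixes u :: "'e::euclidean_space"
  assumes "u \<in> dyadic_grid n" shows "dyadic_round n u = u"
proof (rule euclidean_eqI)
  fix b :: "'e::euclidean_space" assume b: "b \<in> Basis"
  then obtain k :: nat where "u \<bullet> b = real k / 2^n" using assms by (auto simp: dyadic_grid_def)
  then show "dyadic_round n u \<bullet> b = u \<bullet> b" using b by (simp add: inner_dyadic_round)
qed

lemma inner_add_sum_Basis_subset:
  fixes w d :: "'e::euclidean_space"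
  assumes "S \<subseteq> Basis" "c \<in> Basis"
  shows "(w + (\<Sum>b\<in>S. (d \<bullet> b) *\<^sub>R b)) \<bullet> c = w \<bullet> c + (if c \<in> S then d \<bullet> c else 0)"
proof -
  have "(\<Sum>b\<in>S. (d \<bullet> b) *\<^sub>R b) \<bullet> c = (\<Sum>b\<in>S. if b = c then d \<bullet> c else 0)"
    unfolding inner_sum_left using assms by (intro sum.cong) (auto simp: inner_Basis)
  also have "\<dots> = (if c \<in> S then d \<bullet> c else 0)"
    using assms by (simp add: sum.delta' finite_subset[OF _ finite_Basis])
  finally show ?thesis by (simp add: inner_add_left)
qed

lemma dyadic_edge_increment_le:
  fixes f :: "'e::euclidean_space \<Rightarrow> real"
  assumes "w \<in> dyadic_grid n" "w + c *\<^sub>R b \<in> dyadic_grid n" "b \<in> Basis"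
    and "c \<in> {-(1/2^n), 0, 1/2^n}"
  shows "\<bar>f (w + c *\<^sub>R b) - f w\<bar> \<le> max_dyadic_increment n f"
  using assms(4)
proof (elim insertE emptyE)
  assume c: "c = -(1/2^n)"
  then have "(w + c *\<^sub>R b, b) \<in> dyadic_edges n" using assms by (simp add: dyadic_edges_def)
  from max_dyadic_increment_ge[OF this, of f] show ?thesis by (simp add: c abs_minus_commute)
next
  assume "c = 1/2^n"
  then show ?thesis using assms max_dyadic_increment_ge[of w b n f] by (simp add: dyadic_edges_def)
qed (simp add: max_dyadic_increment_nonneg)

text \<open>Two grid points whose coordinates differ by at most one mesh width are joined by a path of
  at most \<open>DIM('e)\<close> grid edges, changing one coordinate at a time.\<close>

lemma dyadic_neighbours_increment_le:
  fixes f :: "'e::euclidean_space \<Rightarrow> real"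
  assumes w: "w \<in> dyadic_grid n" "w' \<in> dyadic_grid n"
    and d: "\<forall>b\<in>Basis. (w' - w) \<bullet> b \<in> {-(1/2^n), 0, 1/2^n}"
  shows "\<bar>f w' - f w\<bar> \<le> DIM('e) * max_dyadic_increment n f"
proof -
  define ws where "ws S = w + (\<Sum>b\<in>S. ((w' - w) \<bullet> b) *\<^sub>R b)" for S
  have ws_inner: "ws S \<bullet> c = (if c \<in> S then w' \<bullet> c else w \<bullet> c)" if "S \<subseteq> Basis" "c \<in> Basis" for S c
    using inner_add_sum_Basis_subset[OF that, of w "w' - w"] by (simp add: ws_def inner_diff_left)
  have ws_grid: "ws S \<in> dyadic_grid n" if "S \<subseteq> Basis" for S
    using w unfolding dyadic_grid_def by (auto simp: ws_inner[OF that])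
  have path: "S \<subseteq> Basis \<longrightarrow> \<bar>f (ws S) - f w\<bar> \<le> card S * max_dyadic_increment n f"
    if "finite S" for S
    using that
  proof (induction S rule: finite_induct)
    case (insert b S)
    show ?case
    proof
      assume sub: "insert b S \<subseteq> Basis"
      have "ws (insert b S) = ws S + ((w' - w) \<bullet> b) *\<^sub>R b"
        using insert by (simp add: ws_def add.assoc)
      then have "\<bar>f (ws (insert b S)) - f (ws S)\<bar> \<le> max_dyadic_increment n f"
        using sub d ws_grid[of S] ws_grid[OF sub] by (simp add: dyadic_edge_increment_le)
      moreover have "\<bar>f (ws S) - f w\<bar> \<le> card S * max_dyadic_increment n f" using insert sub by blast
      ultimately show "\<bar>f (ws (insert b S)) - f w\<bar> \<le> card (insert b S) * max_dyadic_increment n f"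
        using insert by (simp add: algebra_simps)
    qed
  qed (simp add: ws_def)
  have "ws Basis = w'" by (rule euclidean_eqI) (simp add: ws_inner)
  with path[of Basis] show ?thesis by simp
qed

lemma floor_double_cases: "\<lfloor>2 * y\<rfloor> = 2 * \<lfloor>y\<rfloor> \<or> \<lfloor>2 * y\<rfloor> = 2 * \<lfloor>y\<rfloor> + 1" for y :: real
proof (cases "y < of_int \<lfloor>y\<rfloor> + 1/2")
  case True
  then have "\<lfloor>2 * y\<rfloor> = 2 * \<lfloor>y\<rfloor>" by (intro floor_unique) linarith+
  then show ?thesis ..
next
  case False
  then have "\<lfloor>2 * y\<rfloor> = 2 * \<lfloor>y\<rfloor> + 1" by (intro floor_unique; simp; linarith)
  then show ?thesis ..
qed

lemma dyadic_floor_Suc_diff: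
  fixes x :: real
  shows "of_int \<lfloor>2^Suc n * x\<rfloor> / 2^Suc n - of_int \<lfloor>2^n * x\<rfloor> / (2::real)^n \<in> {-(1/2^Suc n), 0, 1/2^Suc n}"
proof -
  have "(2::real)^Suc n * x = 2 * (2^n * x)" by simp
  then have "\<lfloor>2^Suc n * x\<rfloor> = 2 * \<lfloor>2^n * x\<rfloor> \<or> \<lfloor>2^Suc n * x\<rfloor> = 2 * \<lfloor>2^n * x\<rfloor> + 1"
    using floor_double_cases by presburger
  then show ?thesis by (auto simp: field_simps)
qed

lemma floor_diff_cases:
  fixes a c :: real assumes "\<bar>a - c\<bar> \<le> 1"
  shows "of_int \<lfloor>a\<rfloor> - of_int \<lfloor>c\<rfloor> \<in> {-1, 0, 1::real}"
proof -
  have "\<lfloor>a\<rfloor> - \<lfloor>c\<rfloor> \<in> {-1, 0, 1::int}" using assms by auto linarith+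
  then show ?thesis by (auto simp flip: of_int_diff)
qed

lemma dyadic_round_Suc_increment_le:
  fixes f :: "'e::euclidean_space \<Rightarrow> real"
  assumes u: "u \<in> unit_cube"
  shows "\<bar>f (dyadic_round (Suc n) u) - f (dyadic_round n u)\<bar> \<le> DIM('e) * max_dyadic_increment (Suc n) f"
proof (rule dyadic_neighbours_increment_le)
  show "dyadic_round n u \<in> dyadic_grid (Suc n)"
    using dyadic_round_in_grid[OF u, of n] dyadic_grid_mono[of n "Suc n"] by auto
  show "\<forall>b\<in>Basis. (dyadic_round (Suc n) u - dyadic_round n u) \<bullet> b \<in> {- (1 / 2 ^ Suc n), 0, 1 / 2 ^ Suc n}"
    using dyadic_floor_Suc_diff by (simp add: inner_diff_left inner_dyadic_round del: power_Suc)
qed (rule dyadic_round_in_grid[OF u])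

lemma dyadic_round_telescope_le:
  fixes f :: "'e::euclidean_space \<Rightarrow> real"
  assumes u: "u \<in> unit_cube" and "m \<le> k"
  shows "\<bar>f (dyadic_round k u) - f (dyadic_round m u)\<bar> \<le> DIM('e) * (\<Sum>i\<in>{m<..k}. max_dyadic_increment i f)"
  using \<open>m \<le> k\<close>
proof (induction k rule: dec_induct)
  case (step k)
  have "{m<..Suc k} = insert (Suc k) {m<..k}" using step.hyps by auto
  then show ?case
    using dyadic_round_Suc_increment_le[OF u, of f k] step.IH by (simp add: algebra_simps)
qed simp

lemma dyadic_round_close_increment_le:
  fixes f :: "'e::euclidean_space \<Rightarrow> real"
  assumes u: "u \<in> unit_cube" and v: "v \<in> unit_cube"
    and close: "\<forall>b\<in>Basis. \<bar>u \<bullet> b - v \<bullet> b\<bar> \<le> 1/2^m"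
  shows "\<bar>f (dyadic_round m u) - f (dyadic_round m v)\<bar> \<le> DIM('e) * max_dyadic_increment m f"
proof (rule dyadic_neighbours_increment_le)
  show "\<forall>b\<in>Basis. (dyadic_round m u - dyadic_round m v) \<bullet> b \<in> {- (1 / 2 ^ m), 0, 1 / 2 ^ m}"
  proof
    fix b :: 'e assume b: "b \<in> Basis"
    have "\<bar>2^m * (u \<bullet> b) - 2^m * (v \<bullet> b)\<bar> = 2^m * \<bar>u \<bullet> b - v \<bullet> b\<bar>"
      by (simp add: right_diff_distrib[symmetric] abs_mult)
    also have "\<dots> \<le> 1" using close b by (simp add: field_simps)
    finally have "of_int \<lfloor>2^m * (u \<bullet> b)\<rfloor> - of_int \<lfloor>2^m * (v \<bullet> b)\<rfloor> \<in> {-1, 0, 1::real}"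
      by (rule floor_diff_cases)
    then show "(dyadic_round m u - dyadic_round m v) \<bullet> b \<in> {- (1 / 2 ^ m), 0, 1 / 2 ^ m}"
      using b by (auto simp: inner_diff_left inner_dyadic_round diff_divide_distrib[symmetric])
  qed
qed (use dyadic_round_in_grid u v in auto)

lemma sum_power_greaterThanAtMost_le:
  fixes q :: real assumes "0 \<le> q" "q < 1"
  shows "(\<Sum>i\<in>{m<..k}. q^i) \<le> q^m / (1 - q)"
proof (cases "k < m")
  case False
  have "(\<Sum>i\<in>{m<..k}. q^i) \<le> (\<Sum>i\<in>{m..k}. q^i)" by (rule sum_mono2) (use assms in auto)
  also have "\<dots> = (q^m - q^Suc k) / (1 - q)" using assms False by (simp add: sum_gp)
  also have "\<dots> \<le> q^m / (1 - q)" using assms by (intro divide_right_mono) auto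
  finally show ?thesis .
qed (use assms in simp)

text \<open>Round both points to the level of their distance and telescope the rounding errors through
  all finer levels.\<close>

lemma dyadic_modulus_of_continuity:
  fixes f :: "'e::euclidean_space \<Rightarrow> real" and q R :: real
  assumes q: "0 \<le> q" "q < 1" and R: "\<And>n. max_dyadic_increment n f \<le> R * q^n"
    and u: "u \<in> dyadic_points" and v: "v \<in> dyadic_points"
    and close: "\<forall>b\<in>Basis. \<bar>u \<bullet> b - v \<bullet> b\<bar> \<le> 1/2^m"
  shows "\<bar>f u - f v\<bar> \<le> 3 * (DIM('e) * (R * q^m / (1 - q)))"
proof -
  obtain k1 k2 where k12: "u \<in> dyadic_grid k1" "v \<in> dyadic_grid k2"
    using u v by (auto simp: dyadic_points_def)
  define k where "k = max m (max k1 k2)"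
  have uk: "u \<in> dyadic_grid k" "v \<in> dyadic_grid k"
    using subsetD[OF dyadic_grid_mono k12(1)] subsetD[OF dyadic_grid_mono k12(2)] by (simp_all add: k_def)
  have "m \<le> k" by (simp add: k_def)
  have uv: "u \<in> unit_cube" "v \<in> unit_cube" using u v dyadic_points_subset_unit_cube by auto
  have "0 \<le> R" using R[of 0] max_dyadic_increment_nonneg[of 0 f] by simp
  have tail: "(\<Sum>i\<in>{m<..k}. max_dyadic_increment i f) \<le> R * q^m / (1 - q)"
  proof -
    have "(\<Sum>i\<in>{m<..k}. max_dyadic_increment i f) \<le> R * (\<Sum>i\<in>{m<..k}. q^i)"
      unfolding sum_distrib_left by (rule sum_mono) (rule R)
    also have "\<dots> \<le> R * (q^m / (1 - q))"
      using sum_power_greaterThanAtMost_le[OF q] \<open>0 \<le> R\<close> by (intro mult_left_mono) auto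
    finally show ?thesis by simp
  qed
  have "R * q^m \<le> R * q^m / (1 - q)" using q \<open>0 \<le> R\<close> by (simp add: le_divide_eq mult_left_le)
  then have "max_dyadic_increment m f \<le> R * q^m / (1 - q)" using R[of m] by linarith
  then have "\<bar>f (dyadic_round m u) - f (dyadic_round m v)\<bar> \<le> DIM('e) * (R * q^m / (1 - q))"
    using dyadic_round_close_increment_le[OF uv close, of f] mult_left_mono[of _ _ "real DIM('e)"]
    by (meson of_nat_0_le_iff order.trans)
  moreover have "\<bar>f u - f (dyadic_round m u)\<bar> \<le> DIM('e) * (R * q^m / (1 - q))"
    "\<bar>f v - f (dyadic_round m v)\<bar> \<le> DIM('e) * (R * q^m / (1 - q))"
    using dyadic_round_telescope_le[OF uv(1), of m k f] dyadic_round_telescope_le[OF uv(2), of m k f]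
      mult_left_mono[OF tail, of "DIM('e)"] uk \<open>m \<le> k\<close>
    by (simp_all add: k_def[symmetric] dyadic_round_grid_point)
  ultimately show ?thesis by linarith
qed

section \<open>Moment bound for the increment series\<close>

lemma dyadic_edge_in_unit_cube:
  "(u, b) \<in> dyadic_edges n \<Longrightarrow> u \<in> unit_cube \<and> u + (1/2^n) *\<^sub>R b \<in> unit_cube"
  using dyadic_grid_subset_unit_cube by (auto simp: dyadic_edges_def)

lemma max_dyadic_increment_measurable:
  fixes Z :: "'e::euclidean_space \<Rightarrow> 'b \<Rightarrow> real"
  assumes meas: "\<And>u. u \<in> unit_cube \<Longrightarrow> Z u \<in> borel_measurable M"
  shows "(\<lambda>\<omega>. max_dyadic_increment n (\<lambda>u. Z u \<omega>)) \<in> borel_measurable M"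
proof -
  have "max_dyadic_increment n f = (MAX i\<in>insert None (Some ` dyadic_edges n).
      case i of None \<Rightarrow> 0 | Some ub \<Rightarrow> \<bar>f (fst ub + (1/2^n) *\<^sub>R snd ub) - f (fst ub)\<bar>)"
    for f :: "'e \<Rightarrow> real"
    unfolding max_dyadic_increment_def by (simp add: image_image case_prod_beta)
  moreover have "(\<lambda>\<omega>. MAX i\<in>insert None (Some ` dyadic_edges n).
      case i of None \<Rightarrow> 0 | Some ub \<Rightarrow> \<bar>Z (fst ub + (1/2^n) *\<^sub>R snd ub) \<omega> - Z (fst ub) \<omega>\<bar>)
    \<in> borel_measurable M"
  proof (rule borel_measurable_Max)
    fix i assume "i \<in> insert None (Some ` (dyadic_edges n :: ('e \<times> 'e) set))"
    moreover have "Z u \<in> borel_measurable M" "Z (u + (1/2^n) *\<^sub>R b) \<in> borel_measurable M"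
      if "(u, b) \<in> dyadic_edges n" for u b
      using that meas dyadic_edge_in_unit_cube by blast+
    ultimately show "(\<lambda>\<omega>. case i of None \<Rightarrow> 0
        | Some ub \<Rightarrow> \<bar>Z (fst ub + (1/2^n) *\<^sub>R snd ub) \<omega> - Z (fst ub) \<omega>\<bar>) \<in> borel_measurable M"
      by auto
  qed (simp add: finite_dyadic_edges)
  ultimately show ?thesis by simp
qed

definition dyadic_increment_series ::
    "real \<Rightarrow> real \<Rightarrow> ('e::euclidean_space \<Rightarrow> 'b \<Rightarrow> real) \<Rightarrow> 'b \<Rightarrow> ennreal" where
  "dyadic_increment_series p \<epsilon> Z \<omega> =
     (\<Sum>n. ennreal (2 powr (real n * \<epsilon> * p) * max_dyadic_increment n (\<lambda>u. Z u \<omega>) powr p))"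

lemma dyadic_increment_series_measurable:
  fixes Z :: "'e::euclidean_space \<Rightarrow> 'b \<Rightarrow> real"
  assumes "\<And>u. u \<in> unit_cube \<Longrightarrow> Z u \<in> borel_measurable M"
  shows "dyadic_increment_series p \<epsilon> Z \<in> borel_measurable M"
proof -
  note [measurable] = max_dyadic_increment_measurable[OF assms]
  show ?thesis unfolding dyadic_increment_series_def[abs_def] by measurable
qed

lemma max_dyadic_increment_powr_le_sum:
  fixes f :: "'e::euclidean_space \<Rightarrow> real"
  shows "ennreal (max_dyadic_increment n f powr p)
    \<le> (\<Sum>i\<in>dyadic_edges n. ennreal (\<bar>f (fst i + (1/2^n) *\<^sub>R snd i) - f (fst i)\<bar> powr p))"
proof -
  have "max_dyadic_increment n f \<in> insert 0 ((\<lambda>(u, b). \<bar>f (u + (1/2^n) *\<^sub>R b) - f u\<bar>) ` dyadic_edges n)"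
    unfolding max_dyadic_increment_def by (rule Max_in) (auto simp: finite_dyadic_edges)
  then show ?thesis
  proof
    assume "max_dyadic_increment n f \<in> (\<lambda>(u, b). \<bar>f (u + (1/2^n) *\<^sub>R b) - f u\<bar>) ` dyadic_edges n"
    then obtain i where i: "i \<in> dyadic_edges n"
      "max_dyadic_increment n f = \<bar>f (fst i + (1/2^n) *\<^sub>R snd i) - f (fst i)\<bar>"
      by (auto simp: case_prod_beta)
    show ?thesis unfolding i(2) by (rule member_le_sum[OF i(1)]) (auto simp: finite_dyadic_edges)
  qed simp
qed

lemma nn_integral_max_dyadic_increment_le:
  fixes Z :: "'e::euclidean_space \<Rightarrow> 'b \<Rightarrow> real" and K p :: real
  assumes K: "K \<ge> 0"
    and meas: "\<And>u. u \<in> unit_cube \<Longrightarrow> Z u \<in> borel_measurable M"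
    and inc: "\<And>u b. (u, b) \<in> dyadic_edges n \<Longrightarrow>
       (\<integral>\<^sup>+\<omega>. ennreal (\<bar>Z (u + (1/2^n) *\<^sub>R b) \<omega> - Z u \<omega>\<bar> powr p) \<partial>M) \<le> ennreal K"
  shows "(\<integral>\<^sup>+\<omega>. ennreal (max_dyadic_increment n (\<lambda>u. Z u \<omega>) powr p) \<partial>M)
    \<le> ennreal ((2^n + 1) ^ DIM('e) * DIM('e) * K)"
proof -
  have "(\<integral>\<^sup>+\<omega>. ennreal (max_dyadic_increment n (\<lambda>u. Z u \<omega>) powr p) \<partial>M)
      \<le> (\<integral>\<^sup>+\<omega>. (\<Sum>i\<in>dyadic_edges n. ennreal (\<bar>Z (fst i + (1/2^n) *\<^sub>R snd i) \<omega> - Z (fst i) \<omega>\<bar> powr p)) \<partial>M)"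
    by (rule nn_integral_mono) (rule max_dyadic_increment_powr_le_sum)
  also have "\<dots> = (\<Sum>i\<in>dyadic_edges n.
      \<integral>\<^sup>+\<omega>. ennreal (\<bar>Z (fst i + (1/2^n) *\<^sub>R snd i) \<omega> - Z (fst i) \<omega>\<bar> powr p) \<partial>M)"
  proof (rule nn_integral_sum)
    fix i assume "i \<in> (dyadic_edges n :: ('e \<times> 'e) set)"
    then have "Z (fst i) \<in> borel_measurable M" "Z (fst i + (1/2^n) *\<^sub>R snd i) \<in> borel_measurable M"
      using meas dyadic_edge_in_unit_cube[of "fst i" "snd i" n] by auto
    then show "(\<lambda>\<omega>. ennreal (\<bar>Z (fst i + (1/2^n) *\<^sub>R snd i) \<omega> - Z (fst i) \<omega>\<bar> powr p)) \<in> borel_measurable M"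
      by measurable
  qed
  also have "\<dots> \<le> (\<Sum>i\<in>(dyadic_edges n :: ('e \<times> 'e) set). ennreal K)"
    using inc by (intro sum_mono) (auto simp: case_prod_beta)
  also have "\<dots> = ennreal (card (dyadic_edges n :: ('e \<times> 'e) set) * K)"
    using K by (simp add: ennreal_mult ennreal_of_nat_eq_real_of_nat)
  also have "\<dots> \<le> ennreal ((2^n + 1) ^ DIM('e) * DIM('e) * K)"
  proof (intro ennreal_leI mult_right_mono K)
    show "real (card (dyadic_edges n :: ('e \<times> 'e) set)) \<le> (2^n + 1) ^ DIM('e) * DIM('e)"
      using of_nat_mono[OF card_dyadic_edges_le[of n, where 'e='e]] by simp
  qed
  finally show ?thesis by simp
qed

lemma dyadic_level_weight_le:
  fixes p \<eta> K :: real and d n :: nat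
  assumes p: "p > 0" and K: "K \<ge> 0"
  shows "2 powr (real n * ((\<eta> - d) / (2*p)) * p) * ((2^n + 1) ^ d * d * (K * 2 powr (- real n * \<eta>)))
    \<le> K * d * 2^d * (2 powr (-(\<eta> - d)/2)) ^ n"
proof -
  have "((2::real)^n + 1) ^ d \<le> (2 * 2^n) ^ d" by (intro power_mono) auto
  also have "\<dots> = 2^d * 2 powr (real n * d)"
    by (simp add: power_mult_distrib powr_realpow[symmetric] powr_powr)
  finally have card: "((2::real)^n + 1) ^ d \<le> 2^d * 2 powr (real n * d)" .
  have "2 powr (real n * ((\<eta> - d) / (2*p)) * p) * 2 powr (real n * d) * 2 powr (- real n * \<eta>)
      = 2 powr (real n * ((\<eta> - d) / (2*p)) * p + real n * d + (- real n * \<eta>))"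
    by (simp only: powr_add)
  also have "real n * ((\<eta> - d) / (2*p)) * p + real n * d + (- real n * \<eta>) = real n * (-(\<eta> - d)/2)"
    using p by (simp add: field_simps)
  also have "2 powr (real n * (-(\<eta> - d)/2)) = (2 powr (-(\<eta> - d)/2)) ^ n"
    by (rule powr_power[symmetric]) simp
  finally have rate: "2 powr (real n * ((\<eta> - d) / (2*p)) * p) * 2 powr (real n * d) * 2 powr (- real n * \<eta>)
      = (2 powr (-(\<eta> - d)/2)) ^ n" .
  have "2 powr (real n * ((\<eta> - d) / (2*p)) * p) * ((2^n + 1) ^ d * d * (K * 2 powr (- real n * \<eta>)))
      = ((2::real)^n + 1) ^ d * (K * d * (2 powr (real n * ((\<eta> - d) / (2*p)) * p) * 2 powr (- real n * \<eta>)))"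
    by (simp add: algebra_simps)
  also have "\<dots> \<le> (2^d * 2 powr (real n * d)) * (K * d * (2 powr (real n * ((\<eta> - d) / (2*p)) * p) * 2 powr (- real n * \<eta>)))"
    using K by (intro mult_right_mono[OF card]) auto
  also have "\<dots> = K * d * 2^d * (2 powr (-(\<eta> - d)/2)) ^ n"
    by (simp only: rate[symmetric]) (simp add: algebra_simps)
  finally show ?thesis .
qed

text \<open>The expectation bound of Kolmogorov's criterion on the unit cube: if every grid edge of
  level \<open>n\<close> has \<open>p\<close>-th moment at most \<open>K 2\<^sup>-\<^sup>n\<^sup>\<eta>\<close> with \<open>\<eta> > DIM('e)\<close>, the roughly \<open>2\<^sup>n\<^sup>d\<close> edges
  of level \<open>n\<close> still leave a summable excess \<open>2\<^sup>-\<^sup>n\<^sup>(\<^sup>\<eta>\<^sup>-\<^sup>d\<^sup>)\<close>; half of it pays for the weight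
  \<open>2\<^sup>n\<^sup>\<epsilon>\<^sup>p\<close>.\<close>

lemma nn_integral_dyadic_increment_series_le:
  fixes Z :: "'e::euclidean_space \<Rightarrow> 'b \<Rightarrow> real" and p K \<eta> :: real
  assumes p: "p > 0" and K: "K \<ge> 0" and \<eta>: "\<eta> > DIM('e)"
    and meas: "\<And>u. u \<in> unit_cube \<Longrightarrow> Z u \<in> borel_measurable M"
    and inc: "\<And>n u b. (u, b) \<in> dyadic_edges n \<Longrightarrow>
       (\<integral>\<^sup>+\<omega>. ennreal (\<bar>Z (u + (1/2^n) *\<^sub>R b) \<omega> - Z u \<omega>\<bar> powr p) \<partial>M) \<le> ennreal (K * 2 powr (- real n * \<eta>))"
  shows "(\<integral>\<^sup>+\<omega>. dyadic_increment_series p ((\<eta> - DIM('e)) / (2*p)) Z \<omega> \<partial>M)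
     \<le> ennreal (K * DIM('e) * 2 ^ DIM('e) / (1 - 2 powr (-(\<eta> - DIM('e))/2)))"
proof -
  define \<epsilon> where "\<epsilon> = (\<eta> - DIM('e)) / (2*p)"
  define r where "r = 2 powr (-(\<eta> - DIM('e))/2)"
  have r: "0 < r" "r < 1" using \<eta> by (auto simp: r_def powr_less_one)
  note [measurable] = max_dyadic_increment_measurable[OF meas]
  have level: "(\<integral>\<^sup>+\<omega>. ennreal (2 powr (real n * \<epsilon> * p) * max_dyadic_increment n (\<lambda>u. Z u \<omega>) powr p) \<partial>M)
      \<le> ennreal (K * DIM('e) * 2 ^ DIM('e) * r^n)" for n
  proof -
    have "(\<integral>\<^sup>+\<omega>. ennreal (2 powr (real n * \<epsilon> * p) * max_dyadic_increment n (\<lambda>u. Z u \<omega>) powr p) \<partial>M)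
        = ennreal (2 powr (real n * \<epsilon> * p)) * (\<integral>\<^sup>+\<omega>. ennreal (max_dyadic_increment n (\<lambda>u. Z u \<omega>) powr p) \<partial>M)"
      by (subst nn_integral_cmult[symmetric]) (auto simp: ennreal_mult)
    also have "\<dots> \<le> ennreal (2 powr (real n * \<epsilon> * p)) * ennreal ((2^n + 1) ^ DIM('e) * DIM('e) * (K * 2 powr (- real n * \<eta>)))"
      using K by (intro mult_left_mono nn_integral_max_dyadic_increment_le[OF _ meas inc]) simp_all
    also have "\<dots> = ennreal (2 powr (real n * \<epsilon> * p) *
        ((2^n + 1) ^ DIM('e) * DIM('e) * (K * 2 powr (- real n * \<eta>))))"
      using K by (intro ennreal_mult[symmetric]) auto
    also have "\<dots> \<le> ennreal (K * DIM('e) * 2 ^ DIM('e) * r^n)"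
      unfolding \<epsilon>_def r_def by (intro ennreal_leI dyadic_level_weight_le p K)
    finally show ?thesis .
  qed
  have "(\<integral>\<^sup>+\<omega>. dyadic_increment_series p \<epsilon> Z \<omega> \<partial>M)
      = (\<Sum>n. \<integral>\<^sup>+\<omega>. ennreal (2 powr (real n * \<epsilon> * p) * max_dyadic_increment n (\<lambda>u. Z u \<omega>) powr p) \<partial>M)"
    unfolding dyadic_increment_series_def by (rule nn_integral_suminf) measurable
  also have "\<dots> \<le> (\<Sum>n. ennreal (K * DIM('e) * 2 ^ DIM('e) * r^n))"
    by (intro suminf_le level) auto
  also have "\<dots> = ennreal (K * DIM('e) * 2 ^ DIM('e) * (1 / (1 - r)))"
    using K r by (intro suminf_ennreal_eq sums_mult geometric_sums) auto
  finally show ?thesis by (simp add: \<epsilon>_def r_def)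
qed

lemma max_dyadic_increment_le_series:
  fixes Z :: "'e::euclidean_space \<Rightarrow> 'b \<Rightarrow> real"
  assumes p: "p > 0" and fin: "dyadic_increment_series p \<epsilon> Z \<omega> \<noteq> \<infinity>"
  shows "max_dyadic_increment n (\<lambda>u. Z u \<omega>)
    \<le> enn2real (dyadic_increment_series p \<epsilon> Z \<omega>) powr (1/p) * (2 powr (-\<epsilon>)) ^ n"
proof -
  define S where "S = enn2real (dyadic_increment_series p \<epsilon> Z \<omega>)"
  define m where "m = max_dyadic_increment n (\<lambda>u. Z u \<omega>)"
  have m: "0 \<le> m" by (simp add: m_def max_dyadic_increment_nonneg)
  have "(\<Sum>i\<in>{n}. ennreal (2 powr (real i * \<epsilon> * p) * max_dyadic_increment i (\<lambda>u. Z u \<omega>) powr p))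
      \<le> (\<Sum>i. ennreal (2 powr (real i * \<epsilon> * p) * max_dyadic_increment i (\<lambda>u. Z u \<omega>) powr p))"
    by (rule sum_le_suminf) auto
  then have "ennreal (2 powr (real n * \<epsilon> * p) * m powr p) \<le> ennreal S"
    using fin by (simp add: dyadic_increment_series_def m_def S_def ennreal_enn2real_if)
  then have "2 powr (real n * \<epsilon> * p) * m powr p \<le> S" by (simp add: S_def)
  then have "(2 powr (real n * \<epsilon> * p) * m powr p) * 2 powr (- real n * \<epsilon> * p)
      \<le> S * 2 powr (- real n * \<epsilon> * p)"
    by (intro mult_right_mono) auto
  also have "(2 powr (real n * \<epsilon> * p) * m powr p) * 2 powr (- real n * \<epsilon> * p) = m powr p"
    by (simp add: powr_minus field_simps)
  finally have "m powr p \<le> S * 2 powr (- real n * \<epsilon> * p)" .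
  then have "(m powr p) powr (1/p) \<le> (S * 2 powr (- real n * \<epsilon> * p)) powr (1/p)"
    using p m by (intro powr_mono2) auto
  also have "(m powr p) powr (1/p) = m" using p m by (simp add: powr_powr)
  also have "(S * 2 powr (- real n * \<epsilon> * p)) powr (1/p) = S powr (1/p) * (2 powr (- real n * \<epsilon> * p)) powr (1/p)"
    by (simp add: S_def powr_mult)
  also have "(2 powr (- real n * \<epsilon> * p)) powr (1/p) = (2 powr (-\<epsilon>)) ^ n"
    using p by (simp add: powr_powr powr_realpow[symmetric] mult.commute)
  finally show ?thesis by (simp add: S_def m_def)
qed

lemma dyadic_modulus_of_series:
  fixes Z :: "'e::euclidean_space \<Rightarrow> 'b \<Rightarrow> real"
  assumes p: "p > 0" and \<epsilon>: "\<epsilon> > 0" and fin: "dyadic_increment_series p \<epsilon> Z \<omega> \<noteq> \<infinity>"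
    and u: "u \<in> dyadic_points" and v: "v \<in> dyadic_points"
    and close: "\<forall>b\<in>Basis. \<bar>u \<bullet> b - v \<bullet> b\<bar> \<le> 1/2^m"
  shows "\<bar>Z u \<omega> - Z v \<omega>\<bar> \<le> 3 * (DIM('e) *
    (enn2real (dyadic_increment_series p \<epsilon> Z \<omega>) powr (1/p) * (2 powr (-\<epsilon>)) ^ m / (1 - 2 powr (-\<epsilon>))))"
proof (rule dyadic_modulus_of_continuity[where f = "\<lambda>u. Z u \<omega>", OF _ _ _ u v close])
  show "2 powr - \<epsilon> < 1" using \<epsilon> by (simp add: powr_less_one)
qed (simp_all add: max_dyadic_increment_le_series[OF p fin])

lemma dyadic_oscillation_of_series:
  fixes Z :: "'e::euclidean_space \<Rightarrow> 'b \<Rightarrow> real"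
  assumes p: "p > 0" and \<epsilon>: "\<epsilon> > 0" and fin: "dyadic_increment_series p \<epsilon> Z \<omega> \<noteq> \<infinity>"
    and u: "u \<in> dyadic_points"
  shows "\<bar>Z u \<omega> - Z 0 \<omega>\<bar> \<le> 3 * (DIM('e) *
    (enn2real (dyadic_increment_series p \<epsilon> Z \<omega>) powr (1/p) / (1 - 2 powr (-\<epsilon>))))"
proof -
  have "\<forall>b\<in>Basis. \<bar>u \<bullet> b - (0::'e) \<bullet> b\<bar> \<le> 1/2^0"
    using u dyadic_points_subset_unit_cube by (auto simp: unit_cube_def)
  from dyadic_modulus_of_series[OF p \<epsilon> fin u zero_in_dyadic_points this] show ?thesis by simp
qed

lemma abs_add_powr_le:
  fixes a b p :: real assumes "p > 0"
  shows "\<bar>a + b\<bar> powr p \<le> 2 powr p * (\<bar>a\<bar> powr p + \<bar>b\<bar> powr p)"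
proof -
  have "\<bar>a + b\<bar> powr p \<le> (2 * max \<bar>a\<bar> \<bar>b\<bar>) powr p" using assms by (intro powr_mono2) auto
  also have "\<dots> = 2 powr p * max \<bar>a\<bar> \<bar>b\<bar> powr p" by (simp add: powr_mult)
  also have "max \<bar>a\<bar> \<bar>b\<bar> powr p \<le> \<bar>a\<bar> powr p + \<bar>b\<bar> powr p" by (simp add: max_def)
  finally show ?thesis by (simp add: mult_left_mono)
qed

lemma add3_powr_le:
  fixes a b c p :: real assumes "p > 0" "0 \<le> a" "0 \<le> b" "0 \<le> c"
  shows "(a + b + c) powr p \<le> 3 powr p * (a powr p + b powr p + c powr p)"
proof -
  have "(a + b + c) powr p \<le> (3 * max a (max b c)) powr p" using assms by (intro powr_mono2) auto
  also have "\<dots> = 3 powr p * max a (max b c) powr p" using assms by (simp add: powr_mult)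
  also have "max a (max b c) powr p \<le> a powr p + b powr p + c powr p" by (simp add: max_def)
  finally show ?thesis by (simp add: mult_left_mono)
qed

section \<open>Space-time charts\<close>

lemma ball_Basis_prod_real:
  "(\<forall>c\<in>(Basis :: ('a::euclidean_space \<times> real) set). P c) \<longleftrightarrow> (\<forall>b\<in>Basis. P (b, 0)) \<and> P (0, 1)"
  by (auto simp: Basis_prod_def)

lemma unit_cube_prod_real_iff:
  "(u :: 'a::euclidean_space \<times> real) \<in> unit_cube \<longleftrightarrow>
     (\<forall>b\<in>Basis. 0 \<le> fst u \<bullet> b \<and> fst u \<bullet> b \<le> 1) \<and> 0 \<le> snd u \<and> snd u \<le> 1"
  unfolding unit_cube_def by (simp add: ball_Basis_prod_real inner_Pair_0)

lemma dyadic_grid_prod_real_iff: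
  "(u :: 'a::euclidean_space \<times> real) \<in> dyadic_grid n \<longleftrightarrow>
     (\<forall>b\<in>Basis. \<exists>k::nat. k \<le> 2^n \<and> fst u \<bullet> b = real k / 2^n) \<and> (\<exists>k::nat. k \<le> 2^n \<and> snd u = real k / 2^n)"
  unfolding dyadic_grid_def by (simp add: ball_Basis_prod_real inner_Pair_0)

lemma dyadic_fraction_of_int:
  assumes "0 \<le> z" "z \<le> 2^n"
  shows "\<exists>k::nat. k \<le> 2^n \<and> real_of_int z / 2^n = real k / 2^n"
  using assms by (intro exI[of _ "nat z"]) (auto simp: nat_le_iff)

lemma inverse_power_two_antimono: "m \<le> k \<Longrightarrow> 1 / (2::real)^k \<le> 1 / 2^m"
  by (simp add: frac_le power_increasing)

lemma abs_floor_diff_div_le: "\<bar>(of_int \<lfloor>z\<rfloor> - z) / (2::real)^k\<bar> \<le> 1 / 2^k"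
proof -
  have "\<bar>of_int \<lfloor>z\<rfloor> - z\<bar> \<le> 1" by linarith
  then show ?thesis by (simp add: abs_divide divide_right_mono)
qed

text \<open>The point \<open>(t, x)\<close> with \<open>x\<close> in the cube of side \<open>2\<^sup>j\<^sup>+\<^sup>1\<close> around \<open>x\<^sub>0\<close> is given coordinates
  \<open>cube_chart j t x\<close> in the unit cube of \<open>'a \<times> real\<close>; \<open>time_round\<close> and \<open>space_round\<close> are the
  dyadic approximations along which the continuous modification is obtained as a limit.\<close>

locale kolmogorov_parameters =
  fixes x0 :: "'a::euclidean_space" and T p \<gamma> \<beta> \<theta> :: real
  assumes T_pos: "T > 0"
    and p_gt: "p > real DIM('a) + 1"
    and \<gamma>_pos: "0 < \<gamma>" and \<beta>_pos: "0 < \<beta>"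
    and p\<gamma>_gt: "p * \<gamma> > real DIM('a) + 1"
    and p\<beta>_gt: "p * \<beta> > real DIM('a) + 1"
    and \<theta>_gt: "\<theta> > \<gamma>"
begin

definition centred_cube :: "nat \<Rightarrow> 'a set" where
  "centred_cube j = {x. \<forall>b\<in>Basis. \<bar>(x - x0) \<bullet> b\<bar> \<le> 2^j}"

definition cube_chart :: "nat \<Rightarrow> real \<Rightarrow> 'a \<Rightarrow> 'a \<times> real" where
  "cube_chart j t x =
    (\<Sum>b\<in>Basis. (((x - x0) \<bullet> b + 2^j) / 2^(j+1)) *\<^sub>R b, t / T)"

definition chart_time :: "'a \<times> real \<Rightarrow> real" where
  "chart_time u = T * snd u"

definition chart_space :: "nat \<Rightarrow> 'a \<times> real \<Rightarrow> 'a" where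
  "chart_space j u = x0 + 2^(j+1) *\<^sub>R fst u - 2^j *\<^sub>R One"

definition time_round :: "nat \<Rightarrow> real \<Rightarrow> real" where
  "time_round k t = T * (of_int \<lfloor>2^k * (t / T)\<rfloor> / 2^k)"

definition space_round :: "nat \<Rightarrow> 'a \<Rightarrow> 'a" where
  "space_round k x = x0 + (\<Sum>b\<in>Basis. (of_int \<lfloor>2^k * ((x - x0) \<bullet> b)\<rfloor> / 2^k) *\<^sub>R b)"

lemma p_pos: "p > 0" using p_gt by linarith

lemma \<theta>_pos: "\<theta> > 0" using \<theta>_gt \<gamma>_pos by linarith

lemma fst_cube_chart_inner:
  "b \<in> Basis \<Longrightarrow> fst (cube_chart j t x) \<bullet> b = ((x - x0) \<bullet> b + 2^j) / 2^(j+1)"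
  by (simp add: cube_chart_def inner_sum_left_Basis)

lemma snd_cube_chart: "snd (cube_chart j t x) = t / T"
  by (simp add: cube_chart_def)

lemma fst_cube_chart_diff_inner:
  "b \<in> Basis \<Longrightarrow> fst (cube_chart j t x) \<bullet> b - fst (cube_chart j t' x') \<bullet> b = ((x - x') \<bullet> b) / 2^(j+1)"
  by (simp add: fst_cube_chart_inner inner_diff_left field_simps)

lemma chart_time_cube_chart: "chart_time (cube_chart j t x) = t"
  using T_pos by (simp add: chart_time_def cube_chart_def)

lemma chart_space_cube_chart: "chart_space j (cube_chart j t x) = x"
proof (rule euclidean_eqI)
  fix b :: 'a assume b: "b \<in> Basis"
  have "chart_space j (cube_chart j t x) \<bullet> b = x0 \<bullet> b + 2^(j+1) * (((x - x0) \<bullet> b + 2^j) / 2^(j+1)) - 2^j"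
    using b by (simp add: chart_space_def inner_diff_left inner_add_left fst_cube_chart_inner)
  also have "\<dots> = x \<bullet> b" by (simp add: inner_diff_left)
  finally show "chart_space j (cube_chart j t x) \<bullet> b = x \<bullet> b" .
qed

lemma chart_time_in_interval: "u \<in> unit_cube \<Longrightarrow> chart_time u \<in> {0..T}"
  using T_pos by (auto simp: unit_cube_prod_real_iff chart_time_def mult_le_cancel_left1)

lemma inner_space_round:
  "b \<in> Basis \<Longrightarrow> (space_round k x - x0) \<bullet> b = of_int \<lfloor>2^k * ((x - x0) \<bullet> b)\<rfloor> / 2^k"
  by (simp add: space_round_def inner_sum_left_Basis)

lemma floor_time_bounds:
  assumes "t \<in> {0..T}"
  shows "0 \<le> \<lfloor>2^k * (t / T)\<rfloor>" "\<lfloor>2^k * (t / T)\<rfloor> \<le> 2^k"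
proof -
  have t: "0 \<le> t / T" "t / T \<le> 1" using assms T_pos by auto
  then have "0 \<le> (2::real)^k * (t / T)" by (intro mult_nonneg_nonneg) simp_all
  then show "0 \<le> \<lfloor>2^k * (t / T)\<rfloor>" by simp
  have "(2::real)^k * (t / T) \<le> 2^k * 1" using t by (intro mult_left_mono) auto
  then have "\<lfloor>2^k * (t / T)\<rfloor> \<le> \<lfloor>(2::real)^k\<rfloor>" by (intro floor_mono) simp
  then show "\<lfloor>2^k * (t / T)\<rfloor> \<le> 2^k" by simp
qed

lemma floor_space_bounds:
  assumes "x \<in> centred_cube j" "b \<in> Basis"
  shows "- (2^(k+j)) \<le> \<lfloor>2^k * ((x - x0) \<bullet> b)\<rfloor>" "\<lfloor>2^k * ((x - x0) \<bullet> b)\<rfloor> \<le> 2^(k+j)"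
proof -
  have y: "-(2^j) \<le> (x - x0) \<bullet> b" "(x - x0) \<bullet> b \<le> 2^j" using assms by (auto simp: centred_cube_def)
  have "(- (2^(k+j)) :: int) = \<lfloor>2^k * (-(2^j)) :: real\<rfloor>"
    using floor_of_int[of "-(2^(k+j))", where 'a=real] by (simp add: power_add)
  also have "\<dots> \<le> \<lfloor>2^k * ((x - x0) \<bullet> b)\<rfloor>" using y by (intro floor_mono mult_left_mono) auto
  finally show "- (2^(k+j)) \<le> \<lfloor>2^k * ((x - x0) \<bullet> b)\<rfloor>" .
  have "\<lfloor>2^k * ((x - x0) \<bullet> b)\<rfloor> \<le> \<lfloor>2^k * (2^j) :: real\<rfloor>" using y by (intro floor_mono mult_left_mono) auto
  also have "\<lfloor>(2::real)^k * (2^j)\<rfloor> = 2^(k+j)"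
    using floor_of_int[of "2^(k+j)", where 'a=real] by (simp add: power_add)
  finally show "\<lfloor>2^k * ((x - x0) \<bullet> b)\<rfloor> \<le> 2^(k+j)" .
qed

lemma time_round_in_interval:
  assumes "t \<in> {0..T}" shows "time_round k t \<in> {0..T}"
  using floor_time_bounds[OF assms, of k] T_pos
  by (auto simp: time_round_def field_simps)

lemma cube_chart_rounded_in_grid:
  assumes t: "t \<in> {0..T}" and x: "x \<in> centred_cube j"
  shows "cube_chart j (time_round k t) (space_round k x) \<in> dyadic_grid (k+j+1)"
  unfolding dyadic_grid_prod_real_iff
proof (intro conjI ballI)
  fix b :: 'a assume b: "b \<in> Basis"
  define z where "z = \<lfloor>2^k * ((x - x0) \<bullet> b)\<rfloor> + 2^(k+j)"
  have z: "0 \<le> z" "z \<le> 2^(k+j+1)" using floor_space_bounds[OF x b, of k] by (auto simp: z_def)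
  have "fst (cube_chart j (time_round k t) (space_round k x)) \<bullet> b = real_of_int z / 2^(k+j+1)"
    using b by (simp add: fst_cube_chart_inner inner_space_round z_def power_add field_simps)
  then show "\<exists>k'::nat. k' \<le> 2^(k+j+1) \<and> fst (cube_chart j (time_round k t) (space_round k x)) \<bullet> b = real k' / 2^(k+j+1)"
    using dyadic_fraction_of_int[OF z] by simp
next
  define z where "z = \<lfloor>2^k * (t / T)\<rfloor> * 2^(j+1)"
  have z: "0 \<le> z" "z \<le> 2^(k+j+1)" using floor_time_bounds[OF t, of k] by (auto simp: z_def power_add)
  have "snd (cube_chart j (time_round k t) (space_round k x)) = real_of_int z / 2^(k+j+1)"
    using T_pos by (simp add: snd_cube_chart time_round_def z_def power_add field_simps)
  then show "\<exists>k'::nat. k' \<le> 2^(k+j+1) \<and> snd (cube_chart j (time_round k t) (space_round k x)) = real k' / 2^(k+j+1)"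
    using dyadic_fraction_of_int[OF z] by simp
qed

lemma cube_chart_rounded_in_dyadic_points:
  "t \<in> {0..T} \<Longrightarrow> x \<in> centred_cube j \<Longrightarrow> cube_chart j (time_round k t) (space_round k x) \<in> dyadic_points"
  unfolding dyadic_points_def using cube_chart_rounded_in_grid by blast

lemma time_round_close: "t \<in> {0..T} \<Longrightarrow> \<bar>time_round k t - t\<bar> \<le> T / 2^k"
proof -
  have "time_round k t - t = T * ((of_int \<lfloor>2^k * (t / T)\<rfloor> - 2^k * (t / T)) / 2^k)"
    using T_pos by (simp add: time_round_def field_simps)
  then show ?thesis
    using T_pos mult_left_mono[OF abs_floor_diff_div_le[of "2^k * (t / T)" k], of T] by (simp add: abs_mult)
qed

lemma space_round_close: "b \<in> Basis \<Longrightarrow> \<bar>(space_round k x - x) \<bullet> b\<bar> \<le> 1 / 2^k"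
proof -
  assume b: "b \<in> Basis"
  have "(space_round k x - x) \<bullet> b = (space_round k x - x0) \<bullet> b - (x - x0) \<bullet> b" by (simp add: inner_diff_left)
  also have "\<dots> = (of_int \<lfloor>2^k * ((x - x0) \<bullet> b)\<rfloor> - 2^k * ((x - x0) \<bullet> b)) / 2^k"
    using b by (simp add: inner_space_round field_simps)
  finally show ?thesis by (simp only: abs_floor_diff_div_le)
qed

lemma norm_space_round_diff_le: "norm (space_round k x - x) \<le> DIM('a) / 2^k"
proof -
  have "norm (space_round k x - x) \<le> (\<Sum>b\<in>Basis. \<bar>(space_round k x - x) \<bullet> b\<bar>)" by (rule norm_le_l1)
  also have "\<dots> \<le> (\<Sum>b\<in>(Basis::'a set). 1 / 2^k)" by (intro sum_mono space_round_close)
  finally show ?thesis by simp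
qed

lemma cube_chart_rounded_close:
  assumes t: "t \<in> {0..T}" "t' \<in> {0..T}"
    and k: "m+2 \<le> k" "m+2 \<le> k'"
    and close_t: "\<bar>t - t'\<bar> \<le> T / 2^(m+1)" and close_x: "\<forall>b\<in>Basis. \<bar>(x - x') \<bullet> b\<bar> \<le> 1 / 2^(m+1)"
  shows "\<forall>c\<in>Basis. \<bar>cube_chart j (time_round k t) (space_round k x) \<bullet> c
                      - cube_chart j (time_round k' t') (space_round k' x') \<bullet> c\<bar> \<le> 1/2^m"
  unfolding ball_Basis_prod_real inner_Pair_0 real_inner_1_right
proof (intro conjI ballI)
  have small: "1 / (2::real)^k \<le> 1 / 2^(m+2)" "1 / (2::real)^k' \<le> 1 / 2^(m+2)"
    using inverse_power_two_antimono[OF k(1)] inverse_power_two_antimono[OF k(2)] by simp_all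
  have sum: "1 / (2::real)^(m+2) + 1 / 2^(m+1) + 1 / 2^(m+2) = 1 / 2^m" by (simp add: field_simps)
  fix b :: 'a assume b: "b \<in> Basis"
  have "\<bar>fst (cube_chart j (time_round k t) (space_round k x)) \<bullet> b - fst (cube_chart j (time_round k' t') (space_round k' x')) \<bullet> b\<bar>
      = \<bar>(space_round k x - space_round k' x') \<bullet> b\<bar> / 2^(j+1)"
    using b by (simp add: fst_cube_chart_diff_inner abs_divide)
  also have "\<dots> \<le> \<bar>(space_round k x - space_round k' x') \<bullet> b\<bar> / 1"
    by (rule divide_left_mono) (auto simp del: power_Suc)
  also have "\<bar>(space_round k x - space_round k' x') \<bullet> b\<bar> / 1
      = \<bar>(space_round k x - x) \<bullet> b + (x - x') \<bullet> b - (space_round k' x' - x') \<bullet> b\<bar>"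
    by (simp add: inner_diff_left)
  also have "\<dots> \<le> 1 / 2^k + 1 / 2^(m+1) + 1 / 2^k'"
    using space_round_close[OF b, of k x] space_round_close[OF b, of k' x'] close_x[rule_format, OF b]
    by (simp only: abs_le_iff) linarith
  also have "\<dots> \<le> 1 / 2^m" using small sum by linarith
  finally show "\<bar>fst (cube_chart j (time_round k t) (space_round k x)) \<bullet> b
      - fst (cube_chart j (time_round k' t') (space_round k' x')) \<bullet> b\<bar> \<le> 1 / 2 ^ m" .
next
  have small: "T / (2::real)^k \<le> T / 2^(m+2)" "T / (2::real)^k' \<le> T / 2^(m+2)"
    using mult_left_mono[OF inverse_power_two_antimono[OF k(1)], of T]
      mult_left_mono[OF inverse_power_two_antimono[OF k(2)], of T] T_pos by simp_all
  have sum: "T / (2::real)^(m+2) + T / 2^(m+1) + T / 2^(m+2) = T / 2^m" by (simp add: field_simps)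
  have "\<bar>time_round k t - time_round k' t'\<bar> \<le> T / 2^k + T / 2^(m+1) + T / 2^k'"
    using time_round_close[OF t(1), of k] time_round_close[OF t(2), of k'] close_t by linarith
  also have "\<dots> \<le> T / 2^m" using small sum by linarith
  finally have "\<bar>time_round k t - time_round k' t'\<bar> / T \<le> 1 / 2^m"
    using T_pos by (simp add: divide_le_eq field_simps)
  then show "\<bar>snd (cube_chart j (time_round k t) (space_round k x))
      - snd (cube_chart j (time_round k' t') (space_round k' x'))\<bar> \<le> 1 / 2 ^ m"
    using T_pos by (simp add: snd_cube_chart diff_divide_distrib[symmetric] abs_divide)
qed

lemma centred_cube_mono: "i \<le> j \<Longrightarrow> centred_cube i \<subseteq> centred_cube j"
  unfolding centred_cube_def using power_increasing[of i j "2::real"] by (auto intro: order.trans)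

lemma in_centred_cube_if_norm_le: "norm (x - x0) \<le> 2^j \<Longrightarrow> x \<in> centred_cube j"
  using Basis_le_norm[of _ "x - x0"] by (auto simp: centred_cube_def intro: order.trans)

lemma norm_le_if_in_centred_cube: "x \<in> centred_cube j \<Longrightarrow> norm (x - x0) \<le> DIM('a) * 2^j"
proof -
  assume x: "x \<in> centred_cube j"
  have "norm (x - x0) \<le> (\<Sum>b\<in>Basis. \<bar>(x - x0) \<bullet> b\<bar>)" by (rule norm_le_l1)
  also have "\<dots> \<le> (\<Sum>b\<in>(Basis::'a set). 2^j)" using x by (intro sum_mono) (auto simp: centred_cube_def)
  finally show ?thesis by simp
qed

lemma ex_centred_cube: "\<exists>j. x \<in> centred_cube j"
proof -
  obtain j where "norm (x - x0) < (2::real)^j" using real_arch_pow[of 2 "norm (x - x0)"] by auto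
  then show ?thesis using in_centred_cube_if_norm_le by (meson less_imp_le)
qed

definition moment_exponent :: "real" where
  "moment_exponent = min (\<gamma> * p) (\<beta> * p)"

definition chaining_exponent :: "real" where
  "chaining_exponent = (moment_exponent - DIM('a \<times> real)) / (2 * p)"

definition decay_ratio :: "real" where
  "decay_ratio = 2 powr (- chaining_exponent)"

definition increment_constant :: "nat \<Rightarrow> real" where
  "increment_constant j = 2 powr (real (j+1) * \<gamma> * p) + T powr (\<beta> * p)"

definition series_constant :: "real" where
  "series_constant =
    real DIM('a \<times> real) * 2 ^ DIM('a \<times> real) / (1 - 2 powr (-(moment_exponent - DIM('a \<times> real))/2))"

definition oscillation_constant :: "real" where
  "oscillation_constant = 3 * (DIM('a \<times> real) / (1 - decay_ratio))"

definition cube_moment_constant :: "real" where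
  "cube_moment_constant = oscillation_constant powr p * series_constant * (2 powr (\<gamma> * p) + T powr (\<beta> * p))
    + DIM('a) powr (\<gamma> * p) + 1"

definition weight_ratio :: "real" where
  "weight_ratio = 2 powr ((\<gamma> - \<theta>) * p)"

definition kolmogorov_constant :: "real" where
  "kolmogorov_constant = 3 powr p * cube_moment_constant * 2 powr (\<theta> * p) / (1 - weight_ratio)"

definition cube_index :: "'a \<Rightarrow> nat" where
  "cube_index x = (LEAST j. x \<in> centred_cube j)"

definition cube_weight :: "nat \<Rightarrow> real" where
  "cube_weight j = 2 powr ((real j - 1) * \<theta>)"

lemma moment_exponent_gt: "moment_exponent > DIM('a \<times> real)"
  using p\<gamma>_gt p\<beta>_gt by (simp add: moment_exponent_def mult.commute)

lemma chaining_exponent_pos: "chaining_exponent > 0"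
  using moment_exponent_gt p_pos by (simp add: chaining_exponent_def)

lemma decay_ratio_bounds: "0 < decay_ratio" "decay_ratio < 1"
  using chaining_exponent_pos by (simp_all add: decay_ratio_def powr_less_one)

lemma increment_constant_pos: "increment_constant j > 0"
  by (simp add: increment_constant_def add_pos_nonneg)

lemma series_constant_pos: "series_constant > 0"
proof -
  have "2 powr (-(moment_exponent - DIM('a \<times> real))/2) < 1"
    using moment_exponent_gt by (intro powr_less_one) auto
  then have "0 < 1 - 2 powr (-(moment_exponent - DIM('a \<times> real))/2)" by linarith
  moreover have "0 < real DIM('a \<times> real) * 2 ^ DIM('a \<times> real)" by (intro mult_pos_pos) simp_all
  ultimately show ?thesis unfolding series_constant_def by (intro divide_pos_pos)
qed

lemma oscillation_constant_nonneg: "oscillation_constant \<ge> 0"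
  using decay_ratio_bounds by (simp add: oscillation_constant_def)

lemma cube_moment_constant_pos: "cube_moment_constant > 0"
  using series_constant_pos
  by (simp add: cube_moment_constant_def add_nonneg_pos add_nonneg_nonneg)

lemma weight_ratio_bounds: "0 < weight_ratio" "weight_ratio < 1"
  using \<theta>_gt p_pos by (simp_all add: weight_ratio_def powr_less_one mult_neg_pos)

lemma kolmogorov_constant_pos: "kolmogorov_constant > 0"
  using cube_moment_constant_pos weight_ratio_bounds by (simp add: kolmogorov_constant_def)

lemma in_centred_cube_index: "x \<in> centred_cube (cube_index x)"
  unfolding cube_index_def using ex_centred_cube by (rule LeastI_ex)

lemma not_in_centred_cube_below_index: "cube_index x = Suc i \<Longrightarrow> x \<notin> centred_cube i"
  unfolding cube_index_def using not_less_Least[of i "\<lambda>j. x \<in> centred_cube j"] by auto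

lemma cube_weight_pos: "cube_weight j > 0"
  by (simp add: cube_weight_def)

text \<open>Outside the smallest cube containing \<open>x\<close>, \<open>\<bar>x - x\<^sub>0\<bar>\<close> is at least half the side of that
  cube; this is why the weight is shifted by one.\<close>

lemma cube_weight_le: "cube_weight (cube_index x) \<le> 1 + norm (x - x0) powr \<theta>"
proof (cases "cube_index x")
  case 0
  have "2 powr (- \<theta>) \<le> 2 powr 0" using \<theta>_pos by (intro powr_mono) auto
  then have "cube_weight (cube_index x) \<le> 1" by (simp add: cube_weight_def 0)
  then show ?thesis using powr_ge_zero[of "norm (x - x0)" \<theta>] by linarith
next
  case (Suc i)
  then obtain b where b: "b \<in> Basis" "\<bar>(x - x0) \<bullet> b\<bar> > 2^i"
    using not_in_centred_cube_below_index by (auto simp: centred_cube_def not_le)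
  then have "(2::real)^i \<le> norm (x - x0)" using Basis_le_norm[of b "x - x0"] by linarith
  then have "((2::real)^i) powr \<theta> \<le> norm (x - x0) powr \<theta>" using \<theta>_pos by (intro powr_mono2) auto
  moreover have "((2::real)^i) powr \<theta> = cube_weight (cube_index x)"
    by (simp add: cube_weight_def Suc powr_realpow[symmetric] powr_powr)
  ultimately show ?thesis by simp
qed

lemma cube_index_ge:
  assumes "norm x0 + DIM('a) * 2^m + 1 \<le> norm x" shows "m \<le> cube_index x"
proof (rule ccontr)
  assume "\<not> m \<le> cube_index x"
  then have "x \<in> centred_cube m"
    using in_centred_cube_index[of x] centred_cube_mono[of "cube_index x" m] by auto
  then have "norm (x - x0) \<le> DIM('a) * 2^m" by (rule norm_le_if_in_centred_cube)
  then show False using assms norm_triangle_ineq[of "x - x0" x0] by simp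
qed

lemma cube_moment_le:
  "oscillation_constant powr p * (increment_constant j * series_constant) + (DIM('a) * 2^j) powr (\<gamma> * p) + 1
    \<le> 2 powr (real j * (\<gamma> * p)) * cube_moment_constant"
proof -
  define g where "g = 2 powr (real j * (\<gamma> * p))"
  have g: "1 \<le> g" unfolding g_def using \<gamma>_pos p_pos by (intro ge_one_powr_ge_zero) auto
  have "real (j+1) * \<gamma> * p = \<gamma> * p + real j * (\<gamma> * p)" by (simp add: algebra_simps)
  then have increment: "increment_constant j = 2 powr (\<gamma> * p) * g + T powr (\<beta> * p)"
    by (simp add: increment_constant_def g_def powr_add del: of_nat_Suc)
  have "T powr (\<beta> * p) \<le> T powr (\<beta> * p) * g" using g by (simp add: mult_le_cancel_left1)
  then have "2 powr (\<gamma> * p) * g + T powr (\<beta> * p) \<le> (2 powr (\<gamma> * p) + T powr (\<beta> * p)) * g"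
    by (simp add: algebra_simps)
  then have "oscillation_constant powr p * (increment_constant j * series_constant)
      \<le> (oscillation_constant powr p * series_constant) * ((2 powr (\<gamma> * p) + T powr (\<beta> * p)) * g)"
    unfolding increment using series_constant_pos
    by (simp add: mult.assoc mult.left_commute[of series_constant] mult_left_mono)
  moreover have "(DIM('a) * 2^j) powr (\<gamma> * p) = DIM('a) powr (\<gamma> * p) * g"
    by (simp add: g_def powr_mult powr_realpow[symmetric] powr_powr)
  moreover have "1 \<le> 1 * g" using g by simp
  ultimately show ?thesis unfolding cube_moment_constant_def g_def[symmetric] by (simp add: algebra_simps)
qed

lemma cube_weight_powr_mult:
  "cube_weight j powr (-p) * 2 powr (real j * (\<gamma> * p)) = 2 powr (\<theta> * p) * weight_ratio ^ j"
proof -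
  have "cube_weight j powr (-p) * 2 powr (real j * (\<gamma> * p)) = 2 powr ((real j - 1) * \<theta> * (-p) + real j * (\<gamma> * p))"
    by (simp add: cube_weight_def powr_powr flip: powr_add)
  also have "(real j - 1) * \<theta> * (-p) + real j * (\<gamma> * p) = \<theta> * p + real j * ((\<gamma> - \<theta>) * p)"
    by (simp add: algebra_simps)
  finally show ?thesis by (simp add: powr_add weight_ratio_def powr_power)
qed

text \<open>The moments on cube \<open>j\<close> grow like \<open>2\<^sup>j\<^sup>\<gamma>\<^sup>p\<close> and the weights decay like \<open>2\<^sup>-\<^sup>j\<^sup>\<theta>\<^sup>p\<close>;
  since \<open>\<theta> > \<gamma>\<close> the weighted moments are summable.\<close>

lemma weighted_cube_moment_le:
  "cube_weight j powr (-p) * (3 powr p * (oscillation_constant powr p * (increment_constant j * series_constant)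
      + (DIM('a) * 2^j) powr (\<gamma> * p) + 1))
    \<le> 3 powr p * cube_moment_constant * 2 powr (\<theta> * p) * weight_ratio ^ j"
proof -
  have "cube_weight j powr (-p) * (3 powr p * (oscillation_constant powr p * (increment_constant j * series_constant)
      + (DIM('a) * 2^j) powr (\<gamma> * p) + 1))
    \<le> cube_weight j powr (-p) * (3 powr p * (2 powr (real j * (\<gamma> * p)) * cube_moment_constant))"
    using cube_moment_le by (intro mult_left_mono) auto
  also have "\<dots> = 3 powr p * cube_moment_constant * (cube_weight j powr (-p) * 2 powr (real j * (\<gamma> * p)))"
    by (simp add: algebra_simps)
  also have "\<dots> = 3 powr p * cube_moment_constant * 2 powr (\<theta> * p) * weight_ratio ^ j"
    unfolding cube_weight_powr_mult by (simp only: mult.assoc)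
  finally show ?thesis .
qed

end

section \<open>The continuous modification\<close>

locale kolmogorov = kolmogorov_parameters x0 T p \<gamma> \<beta> \<theta>
  for x0 :: "'a::euclidean_space" and T p \<gamma> \<beta> \<theta> :: real +
  fixes M :: "'b measure" and X :: "real \<Rightarrow> 'a \<Rightarrow> 'b \<Rightarrow> real" and A :: real
  assumes A_pos: "A > 0"
    and X_measurable: "\<forall>t\<in>{0..T}. \<forall>x. X t x \<in> borel_measurable M"
    and moment_initial: "(\<integral>\<^sup>+ \<omega>. ennreal (\<bar>X 0 x0 \<omega>\<bar> powr p) \<partial>M) \<le> ennreal A"
    and moment_space: "\<forall>t\<in>{0..T}. \<forall>x y. (\<integral>\<^sup>+ \<omega>. ennreal (\<bar>X t x \<omega> - X t y \<omega>\<bar> powr p) \<partial>M)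
                          \<le> ennreal (A * norm (x - y) powr (\<gamma> * p))"
    and moment_time: "\<forall>t\<in>{0..T}. \<forall>s\<in>{0..T}. \<forall>x. (\<integral>\<^sup>+ \<omega>. ennreal (\<bar>X t x \<omega> - X s x \<omega>\<bar> powr p) \<partial>M)
                          \<le> ennreal (A * \<bar>t - s\<bar> powr (\<beta> * p))"
begin

definition chart_process :: "nat \<Rightarrow> 'a \<times> real \<Rightarrow> 'b \<Rightarrow> real" where
  "chart_process j u = X (chart_time u) (chart_space j u)"

definition chart_series :: "nat \<Rightarrow> 'b \<Rightarrow> ennreal" where
  "chart_series j = dyadic_increment_series p chaining_exponent (chart_process j)"

lemma chart_process_measurable: "u \<in> unit_cube \<Longrightarrow> chart_process j u \<in> borel_measurable M"
  using X_measurable chart_time_in_interval by (simp add: chart_process_def)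

lemma chart_series_measurable: "chart_series j \<in> borel_measurable M"
  unfolding chart_series_def by (rule dyadic_increment_series_measurable) (rule chart_process_measurable)

lemma powr_dyadic_scale:
  "(2^(j+1) * (1 / 2^n)) powr a = 2 powr (real (j+1) * a) * 2 powr (- real n * a)"
proof -
  have "(2::real)^(j+1) * (1 / 2^n) = 2 powr (real (j+1)) * 2 powr (- real n)"
    by (simp only: powr_realpow zero_less_numeral powr_minus divide_inverse mult_1)
  then have "((2::real)^(j+1) * (1 / 2^n)) powr a = (2 powr (real (j+1))) powr a * (2 powr (- real n)) powr a"
    by (simp add: powr_mult del: of_nat_Suc)
  also have "\<dots> = 2 powr (real (j+1) * a) * 2 powr (- real n * a)" by (simp add: powr_powr del: of_nat_Suc)
  finally show ?thesis .
qed

lemma chart_process_space_step_le: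
  assumes u: "u \<in> unit_cube" and b: "b \<in> Basis"
  shows "(\<integral>\<^sup>+\<omega>. ennreal (\<bar>chart_process j (u + (1/2^n) *\<^sub>R (b, 0)) \<omega> - chart_process j u \<omega>\<bar> powr p) \<partial>M)
    \<le> ennreal (A * 2 powr (real (j+1) * (\<gamma> * p)) * 2 powr (- real n * (\<gamma> * p)))"
proof -
  have time: "chart_time (u + (1/2^n) *\<^sub>R (b, 0)) = chart_time u" by (simp add: chart_time_def)
  have space: "chart_space j (u + (1/2^n) *\<^sub>R (b, 0)) = chart_space j u + (2^(j+1) * (1/2^n)) *\<^sub>R b"
    by (simp add: chart_space_def algebra_simps)
  have "(\<integral>\<^sup>+\<omega>. ennreal (\<bar>chart_process j (u + (1/2^n) *\<^sub>R (b, 0)) \<omega> - chart_process j u \<omega>\<bar> powr p) \<partial>M)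
      \<le> ennreal (A * norm ((2^(j+1) * (1/2^n)) *\<^sub>R b) powr (\<gamma> * p))"
    unfolding chart_process_def time space
    using moment_space[rule_format, OF chart_time_in_interval[OF u],
        of "chart_space j u + (2^(j+1) * (1/2^n)) *\<^sub>R b" "chart_space j u"]
    by simp
  also have "norm ((2^(j+1) * (1/2^n)) *\<^sub>R b) = 2^(j+1) * (1/(2::real)^n)" using b by simp
  finally show ?thesis by (simp only: powr_dyadic_scale mult.assoc)
qed

lemma chart_process_time_step_le:
  assumes u: "u \<in> unit_cube" and u': "u + (1/2^n) *\<^sub>R (0, 1) \<in> unit_cube"
  shows "(\<integral>\<^sup>+\<omega>. ennreal (\<bar>chart_process j (u + (1/2^n) *\<^sub>R (0, 1)) \<omega> - chart_process j u \<omega>\<bar> powr p) \<partial>M)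
    \<le> ennreal (A * T powr (\<beta> * p) * 2 powr (- real n * (\<beta> * p)))"
proof -
  have time: "chart_time (u + (1/2^n) *\<^sub>R (0, 1)) = chart_time u + T * (1/2^n)"
    by (simp add: chart_time_def algebra_simps)
  have space: "chart_space j (u + (1/2^n) *\<^sub>R (0, 1)) = chart_space j u" by (simp add: chart_space_def)
  have "(\<integral>\<^sup>+\<omega>. ennreal (\<bar>chart_process j (u + (1/2^n) *\<^sub>R (0, 1)) \<omega> - chart_process j u \<omega>\<bar> powr p) \<partial>M)
      \<le> ennreal (A * \<bar>(chart_time u + T * (1/2^n)) - chart_time u\<bar> powr (\<beta> * p))"
    unfolding chart_process_def time space
    using moment_time[rule_format, OF _ chart_time_in_interval[OF u], of "chart_time u + T * (1/2^n)" "chart_space j u"]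
      chart_time_in_interval[OF u'] time by simp
  also have "\<bar>(chart_time u + T * (1/2^n)) - chart_time u\<bar> = T * 2 powr (- real n)"
    using T_pos by (simp add: powr_minus powr_realpow divide_inverse)
  finally show ?thesis using T_pos by (simp add: powr_mult powr_powr mult.assoc)
qed

lemma chart_process_edge_le:
  assumes "(u, c) \<in> dyadic_edges n"
  shows "(\<integral>\<^sup>+\<omega>. ennreal (\<bar>chart_process j (u + (1/2^n) *\<^sub>R c) \<omega> - chart_process j u \<omega>\<bar> powr p) \<partial>M)
    \<le> ennreal (A * increment_constant j * 2 powr (- real n * moment_exponent))"
proof -
  have u: "u \<in> unit_cube" "u + (1/2^n) *\<^sub>R c \<in> unit_cube" "c \<in> Basis"
    using assms dyadic_edge_in_unit_cube by (auto simp: dyadic_edges_def)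
  have "moment_exponent \<le> \<gamma> * p" "moment_exponent \<le> \<beta> * p" by (auto simp: moment_exponent_def)
  then have rate: "2 powr (- real n * (\<gamma> * p)) \<le> 2 powr (- real n * moment_exponent)"
    "2 powr (- real n * (\<beta> * p)) \<le> 2 powr (- real n * moment_exponent)"
    by (auto intro!: powr_mono mult_left_mono)
  have const: "2 powr (real (j+1) * (\<gamma> * p)) \<le> increment_constant j" "T powr (\<beta> * p) \<le> increment_constant j"
    by (simp_all add: increment_constant_def mult.assoc)
  from u(3) consider b where "b \<in> Basis" "c = (b, 0)" | "c = (0, 1)" by (auto simp: Basis_prod_def)
  then show ?thesis
  proof cases
    case 1
    have "A * 2 powr (real (j+1) * (\<gamma> * p)) * 2 powr (- real n * (\<gamma> * p))
        \<le> A * increment_constant j * 2 powr (- real n * moment_exponent)"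
      using A_pos increment_constant_pos[of j] const(1) rate(1) by (intro mult_mono mult_left_mono) auto
    then show ?thesis using chart_process_space_step_le[OF u(1) 1(1)] 1(2)
      by (blast intro: order.trans ennreal_leI)
  next
    case 2
    have "A * T powr (\<beta> * p) * 2 powr (- real n * (\<beta> * p))
        \<le> A * increment_constant j * 2 powr (- real n * moment_exponent)"
      using A_pos increment_constant_pos[of j] const(2) rate(2) by (intro mult_mono mult_left_mono) auto
    then show ?thesis using chart_process_time_step_le[OF u(1)] u(2) 2
      by (blast intro: order.trans ennreal_leI)
  qed
qed

lemma nn_integral_chart_series_le:
  "(\<integral>\<^sup>+\<omega>. chart_series j \<omega> \<partial>M) \<le> ennreal (A * increment_constant j * series_constant)"
proof -
  have "0 \<le> A * increment_constant j" by (intro mult_nonneg_nonneg less_imp_le A_pos increment_constant_pos)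
  from nn_integral_dyadic_increment_series_le[OF p_pos this _ chart_process_measurable chart_process_edge_le]
  show ?thesis
    using moment_exponent_gt
    by (simp add: chart_series_def chaining_exponent_def series_constant_def mult.assoc)
qed

definition regular_outcomes :: "'b set" where
  "regular_outcomes = {\<omega> \<in> space M. \<forall>j. chart_series j \<omega> \<noteq> \<infinity>}"

definition modification :: "real \<Rightarrow> 'a \<Rightarrow> 'b \<Rightarrow> real" where
  "modification t x \<omega> =
    (if \<omega> \<in> regular_outcomes then lim (\<lambda>k. X (time_round k t) (space_round k x) \<omega>) else 0)"

definition chart_modulus :: "nat \<Rightarrow> 'b \<Rightarrow> nat \<Rightarrow> real" where
  "chart_modulus j \<omega> m = 3 * (DIM('a \<times> real) *
    (enn2real (chart_series j \<omega>) powr (1/p) * decay_ratio ^ m / (1 - decay_ratio)))"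

definition chart_oscillation :: "nat \<Rightarrow> 'b \<Rightarrow> real" where
  "chart_oscillation j \<omega> =
    3 * (DIM('a \<times> real) * (enn2real (chart_series j \<omega>) powr (1/p) / (1 - decay_ratio)))"

lemma regular_outcomes_sets: "regular_outcomes \<in> sets M"
proof -
  note [measurable] = chart_series_measurable
  show ?thesis unfolding regular_outcomes_def by measurable
qed

lemma AE_regular_outcomes: "AE \<omega> in M. \<omega> \<in> regular_outcomes"
proof -
  have "AE \<omega> in M. chart_series j \<omega> \<noteq> \<infinity>" for j
    using nn_integral_chart_series_le[of j]
    by (intro nn_integral_noteq_infinite chart_series_measurable) (auto simp: top_unique)
  then have "AE \<omega> in M. \<forall>j. chart_series j \<omega> \<noteq> \<infinity>" by (simp add: AE_all_countable)
  with AE_space show ?thesis by eventually_elim (auto simp: regular_outcomes_def)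
qed

lemma chart_series_finite:
  "\<omega> \<in> regular_outcomes \<Longrightarrow> dyadic_increment_series p chaining_exponent (chart_process j) \<omega> \<noteq> \<infinity>"
  by (simp add: regular_outcomes_def chart_series_def)

lemma chart_process_modulus:
  assumes "\<omega> \<in> regular_outcomes" "w \<in> dyadic_points" "w' \<in> dyadic_points"
    and "\<forall>c\<in>Basis. \<bar>w \<bullet> c - w' \<bullet> c\<bar> \<le> 1/2^m"
  shows "\<bar>chart_process j w \<omega> - chart_process j w' \<omega>\<bar> \<le> chart_modulus j \<omega> m"
  using dyadic_modulus_of_series[OF p_pos chaining_exponent_pos chart_series_finite[OF assms(1)] assms(2-4)]
  by (simp add: chart_modulus_def decay_ratio_def chart_series_def)

lemma chart_process_oscillation:
  assumes "\<omega> \<in> regular_outcomes" "w \<in> dyadic_points"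
  shows "\<bar>chart_process j w \<omega> - X 0 (chart_space j 0) \<omega>\<bar> \<le> chart_oscillation j \<omega>"
  using dyadic_oscillation_of_series[OF p_pos chaining_exponent_pos chart_series_finite[OF assms(1)] assms(2)]
  by (simp add: chart_oscillation_def decay_ratio_def chart_series_def chart_process_def chart_time_def)

lemma ex_chart_modulus_less: "e > 0 \<Longrightarrow> \<exists>m. chart_modulus j \<omega> m < e"
proof -
  assume "e > 0"
  have "(\<lambda>m. chart_modulus j \<omega> m) \<longlonglongrightarrow> 3 * (DIM('a \<times> real) *
      (enn2real (chart_series j \<omega>) powr (1/p) * 0 / (1 - decay_ratio)))"
    unfolding chart_modulus_def using decay_ratio_bounds by (intro tendsto_intros LIMSEQ_power_zero) auto
  from order_tendstoD(2)[OF this, of e] \<open>e > 0\<close> show ?thesis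
    by (auto simp: eventually_sequentially)
qed

lemma rounded_process_diff_le:
  assumes \<omega>: "\<omega> \<in> regular_outcomes" and t: "t \<in> {0..T}" "t' \<in> {0..T}"
    and x: "x \<in> centred_cube j" "x' \<in> centred_cube j" and k: "m+2 \<le> k" "m+2 \<le> k'"
    and close_t: "\<bar>t - t'\<bar> \<le> T / 2^(m+1)" and close_x: "\<forall>b\<in>Basis. \<bar>(x - x') \<bullet> b\<bar> \<le> 1 / 2^(m+1)"
  shows "\<bar>X (time_round k t) (space_round k x) \<omega> - X (time_round k' t') (space_round k' x') \<omega>\<bar>
    \<le> chart_modulus j \<omega> m"
  using chart_process_modulus[where j=j, OF \<omega> cube_chart_rounded_in_dyadic_points[OF t(1) x(1)]
      cube_chart_rounded_in_dyadic_points[OF t(2) x(2)] cube_chart_rounded_close[OF t k close_t close_x]]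
  by (simp add: chart_process_def chart_time_cube_chart chart_space_cube_chart)

lemma rounded_process_convergent:
  assumes \<omega>: "\<omega> \<in> regular_outcomes" and t: "t \<in> {0..T}"
  shows "convergent (\<lambda>k. X (time_round k t) (space_round k x) \<omega>)"
  unfolding Cauchy_convergent_iff[symmetric]
proof (rule metric_CauchyI)
  fix e :: real assume "0 < e"
  obtain j where x: "x \<in> centred_cube j" using ex_centred_cube by blast
  obtain m where "chart_modulus j \<omega> m < e" using ex_chart_modulus_less[OF \<open>0 < e\<close>] by blast
  then have "dist (X (time_round k t) (space_round k x) \<omega>) (X (time_round k' t) (space_round k' x) \<omega>) < e"
    if "m+2 \<le> k" "m+2 \<le> k'" for k k'
    using rounded_process_diff_le[OF \<omega> t t x x that] T_pos by (simp add: dist_real_def)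
  then show "\<exists>M. \<forall>k\<ge>M. \<forall>k'\<ge>M. dist (X (time_round k t) (space_round k x) \<omega>) (X (time_round k' t) (space_round k' x) \<omega>) < e"
    by blast
qed

lemma rounded_process_tendsto:
  "\<omega> \<in> regular_outcomes \<Longrightarrow> t \<in> {0..T} \<Longrightarrow>
    (\<lambda>k. X (time_round k t) (space_round k x) \<omega>) \<longlonglongrightarrow> modification t x \<omega>"
  using rounded_process_convergent[of \<omega> t x] by (simp add: modification_def convergent_LIMSEQ_iff)

lemma modification_diff_le:
  assumes \<omega>: "\<omega> \<in> regular_outcomes" and t: "t \<in> {0..T}" "t' \<in> {0..T}"
    and x: "x \<in> centred_cube j" "x' \<in> centred_cube j"
    and close_t: "\<bar>t - t'\<bar> \<le> T / 2^(m+1)" and close_x: "\<forall>b\<in>Basis. \<bar>(x - x') \<bullet> b\<bar> \<le> 1 / 2^(m+1)"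
  shows "\<bar>modification t x \<omega> - modification t' x' \<omega>\<bar> \<le> chart_modulus j \<omega> m"
proof (rule LIMSEQ_le_const2)
  show "(\<lambda>k. \<bar>X (time_round k t) (space_round k x) \<omega> - X (time_round k t') (space_round k x') \<omega>\<bar>)
      \<longlonglongrightarrow> \<bar>modification t x \<omega> - modification t' x' \<omega>\<bar>"
    by (intro tendsto_intros rounded_process_tendsto \<omega> t)
  show "\<exists>N. \<forall>k\<ge>N. \<bar>X (time_round k t) (space_round k x) \<omega> - X (time_round k t') (space_round k x') \<omega>\<bar>
      \<le> chart_modulus j \<omega> m"
    using rounded_process_diff_le[OF \<omega> t x _ _ close_t close_x] by blast
qed

lemma modification_oscillation_le:
  assumes \<omega>: "\<omega> \<in> regular_outcomes" and t: "t \<in> {0..T}" and x: "x \<in> centred_cube j"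
  shows "\<bar>modification t x \<omega> - X 0 (chart_space j 0) \<omega>\<bar> \<le> chart_oscillation j \<omega>"
proof (rule LIMSEQ_le_const2)
  show "(\<lambda>k. \<bar>X (time_round k t) (space_round k x) \<omega> - X 0 (chart_space j 0) \<omega>\<bar>)
      \<longlonglongrightarrow> \<bar>modification t x \<omega> - X 0 (chart_space j 0) \<omega>\<bar>"
    by (intro tendsto_intros rounded_process_tendsto \<omega> t)
  have "\<bar>X (time_round k t) (space_round k x) \<omega> - X 0 (chart_space j 0) \<omega>\<bar> \<le> chart_oscillation j \<omega>" for k
    using chart_process_oscillation[where j=j, OF \<omega> cube_chart_rounded_in_dyadic_points[OF t x]]
    by (simp add: chart_process_def chart_time_cube_chart chart_space_cube_chart)
  then show "\<exists>N. \<forall>k\<ge>N. \<bar>X (time_round k t) (space_round k x) \<omega> - X 0 (chart_space j 0) \<omega>\<bar> \<le> chart_oscillation j \<omega>"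
    by blast
qed

lemma modification_measurable:
  assumes t: "t \<in> {0..T}" shows "modification t x \<in> borel_measurable M"
proof -
  have "(\<lambda>\<omega>. lim (\<lambda>k. X (time_round k t) (space_round k x) \<omega>)) \<in> borel_measurable M"
    using X_measurable time_round_in_interval[OF t] by (intro borel_measurable_lim_metric) auto
  then show ?thesis unfolding modification_def[abs_def]
    by (intro measurable_If_set) (auto simp: regular_outcomes_sets sets.Int_space_eq2)
qed

lemma modification_local_modulus:
  assumes \<omega>: "\<omega> \<in> regular_outcomes" and t: "t \<in> {0..T}" "t' \<in> {0..T}"
    and j: "norm (x - x0) + 1 \<le> 2^j"
    and close_t: "\<bar>t' - t\<bar> \<le> T / 2^(m+1)" and close_x: "norm (x' - x) \<le> 1 / 2^(m+1)"
  shows "\<bar>modification t' x' \<omega> - modification t x \<omega>\<bar> \<le> chart_modulus j \<omega> m"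
proof (rule modification_diff_le[OF \<omega> t(2) t(1) _ _ close_t])
  have "norm (x' - x0) \<le> norm (x' - x) + norm (x - x0)" using norm_triangle_ineq[of "x' - x" "x - x0"] by simp
  moreover have "(1::real) / 2^(m+1) \<le> 1" using one_le_power[of "2::real" "m+1"] by simp
  then have "norm (x' - x) \<le> 1" using close_x by linarith
  ultimately show "x' \<in> centred_cube j" "x \<in> centred_cube j"
    using j by (auto intro!: in_centred_cube_if_norm_le)
  show "\<forall>b\<in>Basis. \<bar>(x' - x) \<bullet> b\<bar> \<le> 1 / 2^(m+1)"
    using Basis_le_norm[of _ "x' - x"] close_x by (blast intro: order.trans)
qed

lemma continuous_on_modification: "continuous_on ({0..T} \<times> UNIV) (\<lambda>(t, x). modification t x \<omega>)"
proof (cases "\<omega> \<in> regular_outcomes")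
  case False
  then show ?thesis by (simp add: modification_def case_prod_beta)
next
  case \<omega>: True
  show ?thesis unfolding continuous_on_iff
  proof (intro ballI allI impI)
    fix P e assume P: "P \<in> {0..T} \<times> (UNIV :: 'a set)" and "(0::real) < e"
    obtain t x where P_eq: "P = (t, x)" and t: "t \<in> {0..T}" using P by auto
    obtain j where j: "norm (x - x0) + 1 < (2::real)^j" using real_arch_pow[of 2 "norm (x - x0) + 1"] by auto
    obtain m where m: "chart_modulus j \<omega> m < e" using ex_chart_modulus_less[OF \<open>0 < e\<close>] by blast
    have "dist (modification t' x' \<omega>) (modification t x \<omega>) < e"
      if "t' \<in> {0..T}" "dist (t', x') (t, x) < min (T / 2^(m+1)) (1 / 2^(m+1))" for t' x'
      using modification_local_modulus[where x=x and j=j and m=m and x'=x', OF \<omega> t that(1)] j m that(2)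
        dist_fst_le[of "(t', x')" "(t, x)"] dist_snd_le[of "(t', x')" "(t, x)"]
      by (simp add: dist_real_def dist_norm)
    then show "\<exists>d>0. \<forall>P'\<in>{0..T} \<times> UNIV. dist P' P < d \<longrightarrow>
        dist ((\<lambda>(t, x). modification t x \<omega>) P') ((\<lambda>(t, x). modification t x \<omega>) P) < e"
      using T_pos by (intro exI[of _ "min (T / 2^(m+1)) (1 / 2^(m+1))"]) (auto simp: P_eq)
  qed
qed

lemma nn_integral_rounded_error_le:
  assumes t: "t \<in> {0..T}"
  shows "(\<integral>\<^sup>+\<omega>. ennreal (\<bar>X (time_round k t) (space_round k x) \<omega> - X t x \<omega>\<bar> powr p) \<partial>M)
    \<le> ennreal (2 powr p * (A * norm (space_round k x - x) powr (\<gamma> * p) + A * \<bar>time_round k t - t\<bar> powr (\<beta> * p)))"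
proof -
  let ?t = "time_round k t" and ?x = "space_round k x"
  have tk: "?t \<in> {0..T}" by (rule time_round_in_interval[OF t])
  have [measurable]: "X ?t ?x \<in> borel_measurable M" "X ?t x \<in> borel_measurable M" "X t x \<in> borel_measurable M"
    using X_measurable tk t by auto
  have "(\<integral>\<^sup>+\<omega>. ennreal (\<bar>X ?t ?x \<omega> - X t x \<omega>\<bar> powr p) \<partial>M)
      \<le> (\<integral>\<^sup>+\<omega>. ennreal (2 powr p) * (ennreal (\<bar>X ?t ?x \<omega> - X ?t x \<omega>\<bar> powr p)
                + ennreal (\<bar>X ?t x \<omega> - X t x \<omega>\<bar> powr p)) \<partial>M)"
  proof (rule nn_integral_mono)
    fix \<omega>
    show "ennreal (\<bar>X ?t ?x \<omega> - X t x \<omega>\<bar> powr p) \<le> ennreal (2 powr p) * (ennreal (\<bar>X ?t ?x \<omega> - X ?t x \<omega>\<bar> powr p)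
        + ennreal (\<bar>X ?t x \<omega> - X t x \<omega>\<bar> powr p))"
      using abs_add_powr_le[OF p_pos, of "X ?t ?x \<omega> - X ?t x \<omega>" "X ?t x \<omega> - X t x \<omega>"]
      by (simp add: ennreal_mult[symmetric] ennreal_plus[symmetric] del: ennreal_plus)
  qed
  also have "\<dots> = ennreal (2 powr p) * ((\<integral>\<^sup>+\<omega>. ennreal (\<bar>X ?t ?x \<omega> - X ?t x \<omega>\<bar> powr p) \<partial>M)
      + (\<integral>\<^sup>+\<omega>. ennreal (\<bar>X ?t x \<omega> - X t x \<omega>\<bar> powr p) \<partial>M))"
    by (simp add: nn_integral_cmult nn_integral_add)
  also have "\<dots> \<le> ennreal (2 powr p) * (ennreal (A * norm (?x - x) powr (\<gamma> * p)) + ennreal (A * \<bar>?t - t\<bar> powr (\<beta> * p)))"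
    using moment_space[rule_format, OF tk, of ?x x] moment_time[rule_format, OF tk t, of x]
    by (intro mult_left_mono add_mono) auto
  also have "\<dots> = ennreal (2 powr p * (A * norm (?x - x) powr (\<gamma> * p) + A * \<bar>?t - t\<bar> powr (\<beta> * p)))"
    using A_pos by (simp add: ennreal_mult[symmetric] ennreal_plus[symmetric] del: ennreal_plus)
  finally show ?thesis .
qed

lemma rounded_error_bound_tendsto_zero:
  assumes t: "t \<in> {0..T}"
  shows "(\<lambda>k. 2 powr p * (A * norm (space_round k x - x) powr (\<gamma> * p) + A * \<bar>time_round k t - t\<bar> powr (\<beta> * p)))
    \<longlonglongrightarrow> 0"
proof -
  have inv: "(\<lambda>k. c * (1 / (2::real)^k)) \<longlonglongrightarrow> 0" for c :: real
    using tendsto_mult[OF tendsto_const LIMSEQ_power_zero[of "1/2::real"], of c] by (simp add: power_one_over)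
  have "(\<lambda>k. norm (space_round k x - x)) \<longlonglongrightarrow> 0"
    using norm_space_round_diff_le by (intro tendsto_sandwich[OF _ _ tendsto_const inv[of "DIM('a)"]]) auto
  moreover have "(\<lambda>k. \<bar>time_round k t - t\<bar>) \<longlonglongrightarrow> 0"
    using time_round_close[OF t] by (intro tendsto_sandwich[OF _ _ tendsto_const inv[of T]]) auto
  ultimately have "(\<lambda>k. norm (space_round k x - x) powr (\<gamma> * p)) \<longlonglongrightarrow> 0"
    "(\<lambda>k. \<bar>time_round k t - t\<bar> powr (\<beta> * p)) \<longlonglongrightarrow> 0"
    using \<gamma>_pos \<beta>_pos p_pos by (auto intro!: tendsto_zero_powrI)
  then have "(\<lambda>k. 2 powr p * (A * norm (space_round k x - x) powr (\<gamma> * p) + A * \<bar>time_round k t - t\<bar> powr (\<beta> * p)))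
      \<longlonglongrightarrow> 2 powr p * (A * 0 + A * 0)"
    by (intro tendsto_intros)
  then show ?thesis by simp
qed

text \<open>Fatou's lemma along the dyadic approximations: the \<open>p\<close>-th moment of
  \<open>modification t x - X t x\<close> is at most the \<open>liminf\<close> of the moment bounds, which is \<open>0\<close>.\<close>

lemma AE_modification_eq:
  assumes t: "t \<in> {0..T}" shows "AE \<omega> in M. modification t x \<omega> = X t x \<omega>"
proof -
  have [measurable]: "X t x \<in> borel_measurable M" "modification t x \<in> borel_measurable M"
    using X_measurable t modification_measurable[OF t] by auto
  have [measurable]: "X (time_round k t) (space_round k x) \<in> borel_measurable M" for k
    using X_measurable time_round_in_interval[OF t] by auto
  have "(\<integral>\<^sup>+\<omega>. ennreal (\<bar>modification t x \<omega> - X t x \<omega>\<bar> powr p) \<partial>M)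
      \<le> (\<integral>\<^sup>+\<omega>. liminf (\<lambda>k. ennreal (\<bar>X (time_round k t) (space_round k x) \<omega> - X t x \<omega>\<bar> powr p)) \<partial>M)"
  proof (rule nn_integral_mono_AE)
    show "AE \<omega> in M. ennreal (\<bar>modification t x \<omega> - X t x \<omega>\<bar> powr p)
        \<le> liminf (\<lambda>k. ennreal (\<bar>X (time_round k t) (space_round k x) \<omega> - X t x \<omega>\<bar> powr p))"
      using AE_regular_outcomes
    proof eventually_elim
      case (elim \<omega>)
      have "(\<lambda>k. \<bar>X (time_round k t) (space_round k x) \<omega> - X t x \<omega>\<bar> powr p)
          \<longlonglongrightarrow> \<bar>modification t x \<omega> - X t x \<omega>\<bar> powr p"
        using p_pos by (intro tendsto_powr2 tendsto_intros rounded_process_tendsto elim t) auto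
      then have "(\<lambda>k. ennreal (\<bar>X (time_round k t) (space_round k x) \<omega> - X t x \<omega>\<bar> powr p))
          \<longlonglongrightarrow> ennreal (\<bar>modification t x \<omega> - X t x \<omega>\<bar> powr p)"
        by (rule tendsto_ennrealI)
      from lim_imp_Liminf[OF _ this] show ?case by simp
    qed
  qed
  also have "\<dots> \<le> liminf (\<lambda>k. \<integral>\<^sup>+\<omega>. ennreal (\<bar>X (time_round k t) (space_round k x) \<omega> - X t x \<omega>\<bar> powr p) \<partial>M)"
    by (rule nn_integral_liminf) measurable
  also have "\<dots> \<le> liminf (\<lambda>k. ennreal (2 powr p * (A * norm (space_round k x - x) powr (\<gamma> * p)
      + A * \<bar>time_round k t - t\<bar> powr (\<beta> * p))))"
    using nn_integral_rounded_error_le[OF t] by (intro Liminf_mono) auto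
  also have "\<dots> = 0"
    using tendsto_ennrealI[OF rounded_error_bound_tendsto_zero[OF t, of x]] by (simp add: lim_imp_Liminf)
  finally have "AE \<omega> in M. ennreal (\<bar>modification t x \<omega> - X t x \<omega>\<bar> powr p) = 0"
    by (subst nn_integral_0_iff_AE[symmetric]) (simp_all add: le_zero_eq)
  then show ?thesis by eventually_elim (use p_pos in simp)
qed

section \<open>Weighted supremum\<close>

text \<open>\<open>chart_space j 0\<close> is the lower corner of the \<open>j\<close>-th cube; \<open>cube_bound j\<close> bounds
  \<open>\<bar>modification t x\<bar>\<close> on that cube.\<close>

definition cube_bound :: "nat \<Rightarrow> 'b \<Rightarrow> real" where
  "cube_bound j \<omega> = chart_oscillation j \<omega> + \<bar>X 0 (chart_space j 0) \<omega> - X 0 x0 \<omega>\<bar> + \<bar>X 0 x0 \<omega>\<bar>"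

definition weighted_cube_series :: "'b \<Rightarrow> ennreal" where
  "weighted_cube_series \<omega> = (\<Sum>j. ennreal ((cube_bound j \<omega> / cube_weight j) powr p))"

lemma chart_oscillation_eq: "chart_oscillation j \<omega> = oscillation_constant * enn2real (chart_series j \<omega>) powr (1/p)"
  by (simp add: chart_oscillation_def oscillation_constant_def)

lemma chart_oscillation_nonneg: "chart_oscillation j \<omega> \<ge> 0"
  using oscillation_constant_nonneg by (simp add: chart_oscillation_eq)

lemma cube_bound_nonneg: "cube_bound j \<omega> \<ge> 0"
  using chart_oscillation_nonneg by (simp add: cube_bound_def)

lemma cube_bound_measurable: "cube_bound j \<in> borel_measurable M"
proof -
  have [measurable]: "chart_series j \<in> borel_measurable M" "X 0 (chart_space j 0) \<in> borel_measurable M"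
    "X 0 x0 \<in> borel_measurable M"
    using chart_series_measurable X_measurable T_pos by auto
  show ?thesis unfolding cube_bound_def[abs_def] chart_oscillation_def by measurable
qed

lemma abs_modification_le_cube_bound:
  assumes t: "t \<in> {0..T}" shows "\<bar>modification t x \<omega>\<bar> \<le> cube_bound (cube_index x) \<omega>"
proof (cases "\<omega> \<in> regular_outcomes")
  case True
  then show ?thesis
    using modification_oscillation_le[OF True t in_centred_cube_index[of x]] unfolding cube_bound_def
    by linarith
qed (use cube_bound_nonneg in \<open>simp add: modification_def\<close>)

lemma weighted_modification_le:
  assumes t: "t \<in> {0..T}"
  shows "\<bar>modification t x \<omega>\<bar> / (1 + norm (x - x0) powr \<theta>) \<le> cube_bound (cube_index x) \<omega> / cube_weight (cube_index x)"
proof -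
  have "\<bar>modification t x \<omega>\<bar> / (1 + norm (x - x0) powr \<theta>) \<le> cube_bound (cube_index x) \<omega> / (1 + norm (x - x0) powr \<theta>)"
    using abs_modification_le_cube_bound[OF t] by (intro divide_right_mono) auto
  also have "\<dots> \<le> cube_bound (cube_index x) \<omega> / cube_weight (cube_index x)"
    using cube_weight_le cube_weight_pos cube_bound_nonneg
    by (intro divide_left_mono) (auto intro!: mult_pos_pos add_pos_nonneg)
  finally show ?thesis .
qed

lemma chart_oscillation_powr_le:
  "ennreal (chart_oscillation j \<omega> powr p) \<le> ennreal (oscillation_constant powr p) * chart_series j \<omega>"
proof -
  have "chart_oscillation j \<omega> powr p = oscillation_constant powr p * enn2real (chart_series j \<omega>)"
    using oscillation_constant_nonneg p_pos by (simp add: chart_oscillation_eq powr_mult powr_powr)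
  moreover have "ennreal (enn2real (chart_series j \<omega>)) \<le> chart_series j \<omega>"
    by (cases "chart_series j \<omega> = \<top>") (auto simp: ennreal_enn2real_if)
  ultimately show ?thesis by (simp add: ennreal_mult mult_left_mono)
qed

lemma cube_bound_powr_le:
  "ennreal (cube_bound j \<omega> powr p) \<le> ennreal (3 powr p) * (ennreal (oscillation_constant powr p) * chart_series j \<omega>
     + ennreal (\<bar>X 0 (chart_space j 0) \<omega> - X 0 x0 \<omega>\<bar> powr p) + ennreal (\<bar>X 0 x0 \<omega>\<bar> powr p))"
proof -
  have "cube_bound j \<omega> powr p \<le> 3 powr p * (chart_oscillation j \<omega> powr p
      + \<bar>X 0 (chart_space j 0) \<omega> - X 0 x0 \<omega>\<bar> powr p + \<bar>X 0 x0 \<omega>\<bar> powr p)"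
    unfolding cube_bound_def using chart_oscillation_nonneg p_pos by (intro add3_powr_le) auto
  then have "ennreal (cube_bound j \<omega> powr p) \<le> ennreal (3 powr p) * (ennreal (chart_oscillation j \<omega> powr p)
      + ennreal (\<bar>X 0 (chart_space j 0) \<omega> - X 0 x0 \<omega>\<bar> powr p) + ennreal (\<bar>X 0 x0 \<omega>\<bar> powr p))"
    by (simp add: ennreal_mult[symmetric] ennreal_plus[symmetric] del: ennreal_plus)
  also have "ennreal (chart_oscillation j \<omega> powr p) \<le> ennreal (oscillation_constant powr p) * chart_series j \<omega>"
    by (rule chart_oscillation_powr_le)
  finally show ?thesis by (simp add: mult_left_mono add_right_mono)
qed

lemma nn_integral_corner_increment_le:
  "(\<integral>\<^sup>+\<omega>. ennreal (\<bar>X 0 (chart_space j 0) \<omega> - X 0 x0 \<omega>\<bar> powr p) \<partial>M) \<le> ennreal (A * (DIM('a) * 2^j) powr (\<gamma> * p))"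
proof -
  have "norm (chart_space j 0 - x0) powr (\<gamma> * p) \<le> (DIM('a) * 2^j) powr (\<gamma> * p)"
    using norm_le_if_in_centred_cube[of "chart_space j 0" j] \<gamma>_pos p_pos
    by (intro powr_mono2) (auto simp: centred_cube_def chart_space_def inner_diff_left)
  then show ?thesis
    using moment_space[rule_format, of 0 "chart_space j 0" x0] T_pos A_pos
    by (auto elim!: order.trans intro!: ennreal_leI)
qed

lemma nn_integral_cube_bound_powr_le:
  "(\<integral>\<^sup>+\<omega>. ennreal (cube_bound j \<omega> powr p) \<partial>M)
   \<le> ennreal (A * (3 powr p * (oscillation_constant powr p * (increment_constant j * series_constant)
       + (DIM('a) * 2^j) powr (\<gamma> * p) + 1)))"
proof -
  have [measurable]: "chart_series j \<in> borel_measurable M" "X 0 (chart_space j 0) \<in> borel_measurable M"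
    "X 0 x0 \<in> borel_measurable M"
    using chart_series_measurable X_measurable T_pos by auto
  have "(\<integral>\<^sup>+\<omega>. ennreal (cube_bound j \<omega> powr p) \<partial>M)
      \<le> (\<integral>\<^sup>+\<omega>. ennreal (3 powr p) * (ennreal (oscillation_constant powr p) * chart_series j \<omega>
           + ennreal (\<bar>X 0 (chart_space j 0) \<omega> - X 0 x0 \<omega>\<bar> powr p) + ennreal (\<bar>X 0 x0 \<omega>\<bar> powr p)) \<partial>M)"
    by (rule nn_integral_mono) (rule cube_bound_powr_le)
  also have "\<dots> = ennreal (3 powr p) * (ennreal (oscillation_constant powr p) * (\<integral>\<^sup>+\<omega>. chart_series j \<omega> \<partial>M)
      + (\<integral>\<^sup>+\<omega>. ennreal (\<bar>X 0 (chart_space j 0) \<omega> - X 0 x0 \<omega>\<bar> powr p) \<partial>M) + (\<integral>\<^sup>+\<omega>. ennreal (\<bar>X 0 x0 \<omega>\<bar> powr p) \<partial>M))"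
    by (simp add: nn_integral_cmult nn_integral_add)
  also have "\<dots> \<le> ennreal (3 powr p) * (ennreal (oscillation_constant powr p) * ennreal (A * increment_constant j * series_constant)
      + ennreal (A * (DIM('a) * 2^j) powr (\<gamma> * p)) + ennreal A)"
    by (intro mult_left_mono add_mono order.refl moment_initial nn_integral_chart_series_le
        nn_integral_corner_increment_le) simp_all
  also have "\<dots> = ennreal (A * (3 powr p * (oscillation_constant powr p * (increment_constant j * series_constant)
       + (DIM('a) * 2^j) powr (\<gamma> * p) + 1)))"
    using A_pos increment_constant_pos[of j] series_constant_pos
    by (simp add: ennreal_mult[symmetric] ennreal_plus[symmetric] algebra_simps del: ennreal_plus)
  finally show ?thesis .
qed

lemma nn_integral_weighted_cube_series_le:
  "(\<integral>\<^sup>+\<omega>. weighted_cube_series \<omega> \<partial>M) \<le> ennreal (kolmogorov_constant * A)"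
proof -
  have [measurable]: "cube_bound j \<in> borel_measurable M" for j by (rule cube_bound_measurable)
  define c where "c = A * (3 powr p * cube_moment_constant * 2 powr (\<theta> * p))"
  have level: "(\<integral>\<^sup>+\<omega>. ennreal ((cube_bound j \<omega> / cube_weight j) powr p) \<partial>M) \<le> ennreal (c * weight_ratio ^ j)" for j
  proof -
    have "(cube_bound j \<omega> / cube_weight j) powr p = cube_weight j powr (-p) * cube_bound j \<omega> powr p" for \<omega>
    proof -
      have "(cube_bound j \<omega> / cube_weight j) powr p = cube_bound j \<omega> powr p / cube_weight j powr p"
        using cube_bound_nonneg[of j \<omega>] cube_weight_pos[of j] by (simp add: powr_divide)
      then show ?thesis by (simp add: powr_minus divide_inverse mult.commute)
    qed
    then have "(\<integral>\<^sup>+\<omega>. ennreal ((cube_bound j \<omega> / cube_weight j) powr p) \<partial>M)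
        = ennreal (cube_weight j powr (-p)) * (\<integral>\<^sup>+\<omega>. ennreal (cube_bound j \<omega> powr p) \<partial>M)"
      by (simp add: ennreal_mult nn_integral_cmult)
    also have "\<dots> \<le> ennreal (cube_weight j powr (-p)) * ennreal (A * (3 powr p * (oscillation_constant powr p
        * (increment_constant j * series_constant) + (DIM('a) * 2^j) powr (\<gamma> * p) + 1)))"
      by (intro mult_left_mono nn_integral_cube_bound_powr_le) simp
    also have "\<dots> = ennreal (A * (cube_weight j powr (-p) * (3 powr p * (oscillation_constant powr p
        * (increment_constant j * series_constant) + (DIM('a) * 2^j) powr (\<gamma> * p) + 1))))"
      using A_pos increment_constant_pos[of j] series_constant_pos
      by (simp add: ennreal_mult[symmetric] mult.left_commute)
    also have "\<dots> \<le> ennreal (A * (3 powr p * cube_moment_constant * 2 powr (\<theta> * p) * weight_ratio ^ j))"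
      using A_pos by (intro ennreal_leI mult_left_mono weighted_cube_moment_le) simp
    finally show ?thesis by (simp add: c_def mult.assoc)
  qed
  have "(\<integral>\<^sup>+\<omega>. weighted_cube_series \<omega> \<partial>M) = (\<Sum>j. \<integral>\<^sup>+\<omega>. ennreal ((cube_bound j \<omega> / cube_weight j) powr p) \<partial>M)"
    unfolding weighted_cube_series_def by (rule nn_integral_suminf) measurable
  also have "\<dots> \<le> (\<Sum>j. ennreal (c * weight_ratio ^ j))" by (intro suminf_le level) auto
  also have "\<dots> = ennreal (c * (1 / (1 - weight_ratio)))"
    using weight_ratio_bounds A_pos cube_moment_constant_pos
    by (intro suminf_ennreal_eq sums_mult geometric_sums) (auto simp: c_def)
  finally show ?thesis by (simp add: c_def kolmogorov_constant_def mult_ac)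
qed

lemma weighted_cube_series_measurable: "weighted_cube_series \<in> borel_measurable M"
proof -
  have [measurable]: "cube_bound j \<in> borel_measurable M" for j by (rule cube_bound_measurable)
  show ?thesis unfolding weighted_cube_series_def[abs_def] by measurable
qed

lemma sup_weighted_modification_le:
  "(SUP (t, x)\<in>{0..T} \<times> UNIV. ennreal ((\<bar>modification t x \<omega>\<bar> / (1 + norm (x - x0) powr \<theta>)) powr p))
    \<le> weighted_cube_series \<omega>"
proof (rule SUP_least, clarify)
  fix t x assume t: "t \<in> {0..T}"
  have "(\<bar>modification t x \<omega>\<bar> / (1 + norm (x - x0) powr \<theta>)) powr p
      \<le> (cube_bound (cube_index x) \<omega> / cube_weight (cube_index x)) powr p"
    using weighted_modification_le[OF t] p_pos by (intro powr_mono2) (auto intro: add_pos_nonneg)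
  also have "ennreal \<dots> \<le> weighted_cube_series \<omega>"
  proof -
    have "(\<Sum>j\<in>{cube_index x}. ennreal ((cube_bound j \<omega> / cube_weight j) powr p))
        \<le> (\<Sum>j. ennreal ((cube_bound j \<omega> / cube_weight j) powr p))"
      by (rule sum_le_suminf) auto
    then show ?thesis by (simp add: weighted_cube_series_def)
  qed
  finally show "ennreal ((\<bar>modification t x \<omega>\<bar> / (1 + norm (x - x0) powr \<theta>)) powr p) \<le> weighted_cube_series \<omega>"
    by (simp add: ennreal_leI)
qed

lemma sup_weighted_modification_bounds:
  "0 \<le> (SUP t\<in>{0..T}. \<bar>modification t x \<omega>\<bar> / (1 + norm (x - x0) powr \<theta>))"
  "(SUP t\<in>{0..T}. \<bar>modification t x \<omega>\<bar> / (1 + norm (x - x0) powr \<theta>))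
     \<le> cube_bound (cube_index x) \<omega> / cube_weight (cube_index x)"
proof -
  have "0 \<le> \<bar>modification 0 x \<omega>\<bar> / (1 + norm (x - x0) powr \<theta>)" by (simp add: add_pos_nonneg)
  also have "\<dots> \<le> (SUP t\<in>{0..T}. \<bar>modification t x \<omega>\<bar> / (1 + norm (x - x0) powr \<theta>))"
    using T_pos weighted_modification_le by (intro cSUP_upper bdd_aboveI2) auto
  finally show "0 \<le> (SUP t\<in>{0..T}. \<bar>modification t x \<omega>\<bar> / (1 + norm (x - x0) powr \<theta>))" .
  show "(SUP t\<in>{0..T}. \<bar>modification t x \<omega>\<bar> / (1 + norm (x - x0) powr \<theta>))
      \<le> cube_bound (cube_index x) \<omega> / cube_weight (cube_index x)"
    using T_pos weighted_modification_le by (intro cSUP_least) auto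
qed

text \<open>Where the weighted series is finite its terms tend to \<open>0\<close>, and \<open>cube_index x\<close> tends to
  infinity with \<open>x\<close>.\<close>

lemma weighted_modification_tendsto_zero:
  "AE \<omega> in M. ((\<lambda>x. SUP t\<in>{0..T}. \<bar>modification t x \<omega>\<bar> / (1 + norm (x - x0) powr \<theta>)) \<longlongrightarrow> 0) at_infinity"
proof -
  have "AE \<omega> in M. weighted_cube_series \<omega> \<noteq> \<infinity>"
    using nn_integral_weighted_cube_series_le
    by (intro nn_integral_noteq_infinite weighted_cube_series_measurable) (auto simp: top_unique)
  then show ?thesis
  proof eventually_elim
    case (elim \<omega>)
    define a where "a j = cube_bound j \<omega> / cube_weight j" for j
    have a: "0 \<le> a j" for j using cube_bound_nonneg[of j \<omega>] cube_weight_pos[of j] by (simp add: a_def)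
    have "summable (\<lambda>j. a j powr p)"
      using elim unfolding weighted_cube_series_def a_def[symmetric] by (intro summable_suminf_not_top) auto
    from tendsto_zero_powrI[OF summable_LIMSEQ_zero[OF this] tendsto_const, of "1/p"]
    have "(\<lambda>j. (a j powr p) powr (1/p)) \<longlonglongrightarrow> 0" using p_pos by simp
    then have "a \<longlonglongrightarrow> 0" using a p_pos by (simp add: powr_powr powr_one)
    show ?case unfolding tendsto_iff
    proof (intro allI impI)
      fix e :: real assume "0 < e"
      then obtain m where m: "\<And>j. j \<ge> m \<Longrightarrow> a j < e"
        using order_tendstoD(2)[OF \<open>a \<longlonglongrightarrow> 0\<close>] by (auto simp: eventually_sequentially)
      have "dist (SUP t\<in>{0..T}. \<bar>modification t x \<omega>\<bar> / (1 + norm (x - x0) powr \<theta>)) 0 < e"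
        if "norm x0 + DIM('a) * 2^m + 1 \<le> norm x" for x
        using sup_weighted_modification_bounds[of x \<omega>] m[OF cube_index_ge[OF that]]
        by (simp add: dist_real_def a_def)
      then show "\<forall>\<^sub>F x in at_infinity. dist (SUP t\<in>{0..T}. \<bar>modification t x \<omega>\<bar> / (1 + norm (x - x0) powr \<theta>)) 0 < e"
        unfolding eventually_at_infinity by blast
    qed
  qed
qed

theorem ex_continuous_modification:
  "\<exists>Y :: real \<Rightarrow> 'a \<Rightarrow> 'b \<Rightarrow> real.
     (\<forall>t\<in>{0..T}. \<forall>x. Y t x \<in> borel_measurable M) \<and>
     (\<forall>t\<in>{0..T}. \<forall>x. AE \<omega> in M. Y t x \<omega> = X t x \<omega>) \<and>
     (\<forall>\<omega>\<in>space M. continuous_on ({0..T} \<times> UNIV) (\<lambda>(t, x). Y t x \<omega>)) \<and>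
     (\<integral>\<^sup>+ \<omega>. (SUP (t, x)\<in>{0..T} \<times> UNIV. ennreal ((\<bar>Y t x \<omega>\<bar> / (1 + norm (x - x0) powr \<theta>)) powr p)) \<partial>M)
       \<le> ennreal (kolmogorov_constant * A) \<and>
     (AE \<omega> in M. ((\<lambda>x. SUP t\<in>{0..T}. \<bar>Y t x \<omega>\<bar> / (1 + norm (x - x0) powr \<theta>)) \<longlongrightarrow> 0) at_infinity)"
proof (intro exI[of _ modification] conjI ballI allI)
  show "(\<integral>\<^sup>+ \<omega>. (SUP (t, x)\<in>{0..T} \<times> UNIV.
      ennreal ((\<bar>modification t x \<omega>\<bar> / (1 + norm (x - x0) powr \<theta>)) powr p)) \<partial>M)
    \<le> ennreal (kolmogorov_constant * A)"
    using nn_integral_mono[OF sup_weighted_modification_le] nn_integral_weighted_cube_series_le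
    by (rule order.trans)
qed (simp_all add: modification_measurable AE_modification_eq continuous_on_modification
    weighted_modification_tendsto_zero)

end

theorem mainTheorem5:
  fixes p \<gamma> \<beta> \<theta> T :: real
  assumes hp: "p > real DIM('a::euclidean_space) + 1"
    and h\<gamma>: "0 < \<gamma>" "\<gamma> < 1"
    and h\<beta>: "0 < \<beta>" "\<beta> < 1"
    and hp\<gamma>: "p * \<gamma> > real DIM('a) + 1"
    and hp\<beta>: "p * \<beta> > real DIM('a) + 1"
    and h\<theta>: "\<theta> > p * \<gamma> / (p - (real DIM('a) + 1))"
    and hT: "T > 0"
  shows "\<exists>C>0. \<forall>(M :: 'b measure) (X :: real \<Rightarrow> 'a \<Rightarrow> 'b \<Rightarrow> real) (x0 :: 'a) (A :: real).
     prob_space M \<longrightarrow> A > 0 \<longrightarrow>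
     (\<forall>t\<in>{0..T}. \<forall>x. X t x \<in> borel_measurable M) \<longrightarrow>
     (\<integral>\<^sup>+ \<omega>. ennreal (\<bar>X 0 x0 \<omega>\<bar> powr p) \<partial>M) \<le> ennreal A \<longrightarrow>
     (\<forall>t\<in>{0..T}. \<forall>x y. (\<integral>\<^sup>+ \<omega>. ennreal (\<bar>X t x \<omega> - X t y \<omega>\<bar> powr p) \<partial>M)
                        \<le> ennreal (A * norm (x - y) powr (\<gamma> * p))) \<longrightarrow>
     (\<forall>t\<in>{0..T}. \<forall>s\<in>{0..T}. \<forall>x. (\<integral>\<^sup>+ \<omega>. ennreal (\<bar>X t x \<omega> - X s x \<omega>\<bar> powr p) \<partial>M)
                        \<le> ennreal (A * \<bar>t - s\<bar> powr (\<beta> * p))) \<longrightarrow>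
     (\<exists>Y :: real \<Rightarrow> 'a \<Rightarrow> 'b \<Rightarrow> real.
        (\<forall>t\<in>{0..T}. \<forall>x. Y t x \<in> borel_measurable M) \<and>
        (\<forall>t\<in>{0..T}. \<forall>x. AE \<omega> in M. Y t x \<omega> = X t x \<omega>) \<and>
        (\<forall>\<omega>\<in>space M. continuous_on ({0..T} \<times> UNIV) (\<lambda>(t, x). Y t x \<omega>)) \<and>
        (\<integral>\<^sup>+ \<omega>. (SUP (t, x)\<in>{0..T} \<times> UNIV.
              ennreal ((\<bar>Y t x \<omega>\<bar> / (1 + norm (x - x0) powr \<theta>)) powr p)) \<partial>M)
          \<le> ennreal (C * A) \<and>
        (AE \<omega> in M. ((\<lambda>x. SUP t\<in>{0..T}. \<bar>Y t x \<omega>\<bar> / (1 + norm (x - x0) powr \<theta>))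
                        \<longlongrightarrow> 0) at_infinity))"
proof -
  have "\<gamma> * (p - (real DIM('a) + 1)) < \<gamma> * p" using h\<gamma> by simp
  then have "\<gamma> < p * \<gamma> / (p - (real DIM('a) + 1))" using hp by (simp add: field_simps mult.commute)
  then have \<theta>: "\<theta> > \<gamma>" using h\<theta> by linarith
  txt \<open>\<open>kolmogorov_constant\<close> does not depend on the centre, so any centre serves to name it.\<close>
  interpret parameters: kolmogorov_parameters "0 :: 'a" T p \<gamma> \<beta> \<theta>
    using hT hp h\<gamma> h\<beta> hp\<gamma> hp\<beta> \<theta> by unfold_locales
  show ?thesis
    using parameters.kolmogorov_constant_pos
    by (intro exI[of _ parameters.kolmogorov_constant] conjI allI impI kolmogorov.ex_continuous_modification)
      (auto simp: kolmogorov_def kolmogorov_axioms_def parameters.kolmogorov_parameters_axioms)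
qed

end
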